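(* For every $\mathsf{pGCL}$ program $P\in\mathsf{PAST}$, with initial program state $\sigma_0=(P,\eta_0)$, there exist an ordinal $\mathbf{o}$ and functions $g:\mathcal{R}(\sigma_0)\to\mathbf{o}$ (the rank) and $k$ (the certification), assigning to each $\sigma\in\mathcal{R}(\sigma_0)$ a pair $k(\sigma)=(h_\sigma,\epsilon_\sigma)$ with $h_\sigma:\Sigma\to\mathbb{R}$, $\epsilon_\sigma\in\mathbb{R}$, such that: (1) for every $\sigma\in\mathcal{R}(\sigma_0)$, $g(\sigma)=0$ if and only if $\sigma$ is terminal; (2) for every non-terminal $\sigma\in\mathcal{R}(\sigma_0)$, letting $\mathcal{L}(\sigma)=\{\sigma'\in\mathcal{R}(\sigma)\mid g(\sigma')<g(\sigma)\}$, the pair $(h_\sigma,\epsilon_\sigma)$ is an RSM-map and, for every $\tau\in\Sigma$, $h_\sigma(\tau)=0$ if and only if $\tau\in\mathcal{L}(\sigma)\cup(\Sigma\setminus\mathcal{R}(\sigma))$.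
   Context: pGCL. Fix a countable set $\mathrm{Var}$ of variables taking rational values. Programs are generated by $P ::= \bot \mid v:=e \mid P;P \mid P\oplus_p P \mid P\,[\!]\,P \mid \mathtt{while}(b)\{P\}$ ($v\in\mathrm{Var}$, $e,p$ arithmetical expressions, $b$ boolean expression, $\bot$ the empty program; $\oplus_p$ probabilistic choice, $[\!]$ nondeterministic choice). A valuation is $\eta:\mathrm{Var}\to\mathbb{Q}$. A scheduler is a total function $f:\{L_n,R_n,L_p,R_p\}^*\to\{L_n,R_n\}$; $\mathbb{F}$ is the set of schedulers. An execution state is $(P,\eta,a,w)$ with $a\in\mathbb{Q}\cap(0,1]$, $w\in\{L_n,R_n,L_p,R_p\}^*$; a program state is $(P,\eta)$, $\Sigma$ is the set of program states; states with program $\bot$ are terminal. For $f\in\mathbb{F}$, $\to_f$ is the smallest relation with: $(v:=e,\eta,a,w)\to_f(\bot,\eta[v\mapsto[\![e]\!]_\eta],a,w)$; if $(P_1,\eta,a,w)\to_f(P_1',\eta',a',w')$ then $(P_1;P_2,\eta,a,w)\to_f(P_1';P_2,\eta',a',w')$; $(\bot;P_2,\eta,a,w)\to_f(P_2,\eta,a,w)$; $(P_1\oplus_pP_2,\eta,a,w)\to_f(P_2,\eta,a,wR_p)$ if $[\![p]\!]_\eta\le0$, $\to_f(P_1,\eta,a,wL_p)$ if $[\![p]\!]_\eta\ge1$, and if $0<[\![p]\!]_\eta<1$ both $\to_f(P_1,\eta,a[\![p]\!]_\eta,wL_p)$ and $\to_f(P_2,\eta,a(1-[\![p]\!]_\eta),wR_p)$;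 $(P_1[\!]P_2,\eta,a,w)\to_f(P_1,\eta,a,wL_n)$ if $f(w)=L_n$, $\to_f(P_2,\eta,a,wR_n)$ if $f(w)=R_n$; $(\mathtt{while}(b)\{P\},\eta,a,w)\to_f(P;\mathtt{while}(b)\{P\},\eta,a,w)$ if $b$ holds, else $\to_f(\bot,\eta,a,w)$. $\to_f^n$ ($n\ge1$) is the $n$-fold composition, $\to_f^*=\bigcup_{n\ge1}\to_f^n$. For $\sigma=(P,\eta)$ let $\sigma_e=(P,\eta,1,\varepsilon)$. The initial program state of $P$ is $(P,\eta_0)$, $\eta_0\equiv0$. $\mathrm{Prob}((P,\eta,a,w))=a$. $T_{\le k}(\sigma,f)$ is the set of terminal execution states $\tau$ with $\sigma_e\to_f^n\tau$ for some $n\le k$; $\mathrm{ExpRuntime}(\sigma,f)=\sum_{k\in\mathbb{N}}(1-\sum_{\tau\in T_{\le k}(\sigma,f)}\mathrm{Prob}(\tau))$. $\mathsf{PAST}$ is the set of programs $P$ with $\mathrm{ExpRuntime}((P,\eta_0),f)<\infty$ for all $f$. Reachable states: $\mathcal{R}(\sigma)=\{(P',\eta')\in\Sigma\mid\exists f\in\mathbb{F},\exists a',w':\sigma_e\to_f^*(P',\eta',a',w')\}$. RSM-map: a pair $(h,\epsilon)$ with $h:\Sigma\to[0,\infty)$ and real $\epsilon>0$ such that $h$ maps terminal states to $0$ and for every $\sigma=(P,\eta)$ with $h(\sigma)>0$: (i) if there is $\sigma'=(P',\eta')$ with $(P,\eta,1,\varepsilon)\to_f(P',\eta',1,\varepsilon)$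 for all $f$ (deterministic state), then $h(\sigma')+\epsilon\le h(\sigma)$; (ii) if $\sigma$ is nondeterministic with successors $\sigma_l=(P_l,\eta_l)$, $\sigma_r=(P_r,\eta_r)$ (for every $f$, $(P,\eta,1,\varepsilon)\to_f(P_l,\eta_l,1,L_n)$ or $\to_f(P_r,\eta_r,1,R_n)$), then $\max(h(\sigma_l),h(\sigma_r))+\epsilon\le h(\sigma)$; (iii) if $\sigma$ is probabilistic with probability value $p$ and successors $\sigma_l,\sigma_r$ (for all $f$, $(P,\eta,1,\varepsilon)\to_f(P_l,\eta_l,p,L_p)$ and $\to_f(P_r,\eta_r,1-p,R_p)$), then $p\,h(\sigma_l)+(1-p)h(\sigma_r)+\epsilon\le h(\sigma)$. *)

theory Defs
  imports Complex_Main "HOL-Library.Extended_Nonnegative_Real"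
begin

type_synonym var = nat
type_synonym valuation = "var \<Rightarrow> rat"

datatype aexp = AConst rat | AVar var | APlus aexp aexp | AMinus aexp aexp | ATimes aexp aexp

datatype bexp = BTrue | BFalse | BLe aexp aexp | BLt aexp aexp | BEq aexp aexp
  | BNot bexp | BAnd bexp bexp | BOr bexp bexp

fun aval :: "aexp \<Rightarrow> valuation \<Rightarrow> rat" where
  "aval (AConst c) \<eta> = c"
| "aval (AVar v) \<eta> = \<eta> v"
| "aval (APlus e1 e2) \<eta> = aval e1 \<eta> + aval e2 \<eta>"
| "aval (AMinus e1 e2) \<eta> = aval e1 \<eta> - aval e2 \<eta>"
| "aval (ATimes e1 e2) \<eta> = aval e1 \<eta> * aval e2 \<eta>"

fun bval :: "bexp \<Rightarrow> valuation \<Rightarrow> bool" where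
  "bval BTrue \<eta> = True"
| "bval BFalse \<eta> = False"
| "bval (BLe e1 e2) \<eta> = (aval e1 \<eta> \<le> aval e2 \<eta>)"
| "bval (BLt e1 e2) \<eta> = (aval e1 \<eta> < aval e2 \<eta>)"
| "bval (BEq e1 e2) \<eta> = (aval e1 \<eta> = aval e2 \<eta>)"
| "bval (BNot b) \<eta> = (\<not> bval b \<eta>)"
| "bval (BAnd b1 b2) \<eta> = (bval b1 \<eta> \<and> bval b2 \<eta>)"
| "bval (BOr b1 b2) \<eta> = (bval b1 \<eta> \<or> bval b2 \<eta>)"

text \<open>pGCL programs: Bot is the empty program.\<close>
datatype prog = Bot | Assign var aexp | Seq prog prog | PChoice prog aexp prog
  | NChoice prog prog | While bexp prog

datatype dir = Ln | Rn | Lp | Rp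

type_synonym sched = "dir list \<Rightarrow> dir"
type_synonym pstate = "prog \<times> valuation"
type_synonym estate = "prog \<times> valuation \<times> rat \<times> dir list"

definition schedulers :: "sched set" where
  "schedulers = {f. \<forall>w. f w \<in> {Ln, Rn}}"

inductive step :: "sched \<Rightarrow> estate \<Rightarrow> estate \<Rightarrow> bool" for f where
  assign: "step f (Assign v e, \<eta>, a, w) (Bot, \<eta>(v := aval e \<eta>), a, w)"
| seq: "step f (P1, \<eta>, a, w) (P1', \<eta>', a', w') \<Longrightarrow>
        step f (Seq P1 P2, \<eta>, a, w) (Seq P1' P2, \<eta>', a', w')"
| seq_bot: "step f (Seq Bot P2, \<eta>, a, w) (P2, \<eta>, a, w)"
| prob_le0: "aval p \<eta> \<le> 0 \<Longrightarrow> step f (PChoice P1 p P2, \<eta>, a, w) (P2, \<eta>, a, w @ [Rp])"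
| prob_ge1: "aval p \<eta> \<ge> 1 \<Longrightarrow> step f (PChoice P1 p P2, \<eta>, a, w) (P1, \<eta>, a, w @ [Lp])"
| prob_L: "0 < aval p \<eta> \<Longrightarrow> aval p \<eta> < 1 \<Longrightarrow>
        step f (PChoice P1 p P2, \<eta>, a, w) (P1, \<eta>, a * aval p \<eta>, w @ [Lp])"
| prob_R: "0 < aval p \<eta> \<Longrightarrow> aval p \<eta> < 1 \<Longrightarrow>
        step f (PChoice P1 p P2, \<eta>, a, w) (P2, \<eta>, a * (1 - aval p \<eta>), w @ [Rp])"
| nd_L: "f w = Ln \<Longrightarrow> step f (NChoice P1 P2, \<eta>, a, w) (P1, \<eta>, a, w @ [Ln])"
| nd_R: "f w = Rn \<Longrightarrow> step f (NChoice P1 P2, \<eta>, a, w) (P2, \<eta>, a, w @ [Rn])"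
| while_T: "bval b \<eta> \<Longrightarrow> step f (While b P, \<eta>, a, w) (Seq P (While b P), \<eta>, a, w)"
| while_F: "\<not> bval b \<eta> \<Longrightarrow> step f (While b P, \<eta>, a, w) (Bot, \<eta>, a, w)"

fun steps :: "sched \<Rightarrow> nat \<Rightarrow> estate \<Rightarrow> estate \<Rightarrow> bool" where
  "steps f 0 s t = (s = t)"
| "steps f (Suc n) s t = (\<exists>u. step f s u \<and> steps f n u t)"

definition init :: "pstate \<Rightarrow> estate" where
  "init \<sigma> = (fst \<sigma>, snd \<sigma>, 1, [])"

definition eta0 :: valuation where "eta0 = (\<lambda>_. 0)"

definition terminal_e :: "estate \<Rightarrow> bool" where
  "terminal_e s \<longleftrightarrow> fst s = Bot"

definition terminal :: "pstate \<Rightarrow> bool" where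
  "terminal \<sigma> \<longleftrightarrow> fst \<sigma> = Bot"

definition Prob :: "estate \<Rightarrow> rat" where
  "Prob s = fst (snd (snd s))"

definition T_le :: "nat \<Rightarrow> pstate \<Rightarrow> sched \<Rightarrow> estate set" where
  "T_le k \<sigma> f = {\<tau>. terminal_e \<tau> \<and> (\<exists>n. 1 \<le> n \<and> n \<le> k \<and> steps f n (init \<sigma>) \<tau>)}"

definition ExpRuntime :: "pstate \<Rightarrow> sched \<Rightarrow> ennreal" where
  "ExpRuntime \<sigma> f = (\<Sum>k. ennreal (real_of_rat (1 - (\<Sum>\<tau>\<in>T_le k \<sigma> f. Prob \<tau>))))"

definition PAST :: "prog set" where
  "PAST = {P. \<forall>f\<in>schedulers. ExpRuntime (P, eta0) f < \<infinity>}"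

definition Reach :: "pstate \<Rightarrow> pstate set" where
  "Reach \<sigma> = {\<sigma>'. \<exists>f\<in>schedulers. \<exists>a' w' n. 1 \<le> n \<and>
      steps f n (init \<sigma>) (fst \<sigma>', snd \<sigma>', a', w')}"

text \<open>A deterministic state has a unique, scheduler-independent successor with probability 1;
  we ignore the trace word recorded (this also covers p \<le> 0 / p \<ge> 1 probabilistic choices).\<close>
definition det_succ :: "pstate \<Rightarrow> pstate \<Rightarrow> bool" where
  "det_succ \<sigma> \<sigma>' \<longleftrightarrow> (\<forall>f\<in>schedulers. \<exists>w'.
      step f (init \<sigma>) (fst \<sigma>', snd \<sigma>', 1, w'))"

definition nondet_succ :: "pstate \<Rightarrow> pstate \<Rightarrow> pstate \<Rightarrow> bool" where
  "nondet_succ \<sigma> \<sigma>l \<sigma>r \<longleftrightarrow> (\<forall>f\<in>schedulers.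
      step f (init \<sigma>) (fst \<sigma>l, snd \<sigma>l, 1, [Ln]) \<or> step f (init \<sigma>) (fst \<sigma>r, snd \<sigma>r, 1, [Rn]))"

definition prob_succ :: "pstate \<Rightarrow> rat \<Rightarrow> pstate \<Rightarrow> pstate \<Rightarrow> bool" where
  "prob_succ \<sigma> p \<sigma>l \<sigma>r \<longleftrightarrow> (\<forall>f\<in>schedulers.
      step f (init \<sigma>) (fst \<sigma>l, snd \<sigma>l, p, [Lp]) \<and> step f (init \<sigma>) (fst \<sigma>r, snd \<sigma>r, 1 - p, [Rp]))"

definition RSM_map :: "(pstate \<Rightarrow> real) \<Rightarrow> real \<Rightarrow> bool" where
  "RSM_map h \<epsilon> \<longleftrightarrow> \<epsilon> > 0 \<and> (\<forall>\<sigma>. h \<sigma> \<ge> 0) \<and> (\<forall>\<sigma>. terminal \<sigma> \<longrightarrow> h \<sigma> = 0) \<and>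
     (\<forall>\<sigma>. h \<sigma> > 0 \<longrightarrow>
        (\<forall>\<sigma>'. det_succ \<sigma> \<sigma>' \<longrightarrow> h \<sigma>' + \<epsilon> \<le> h \<sigma>) \<and>
        (\<forall>\<sigma>l \<sigma>r. nondet_succ \<sigma> \<sigma>l \<sigma>r \<longrightarrow> max (h \<sigma>l) (h \<sigma>r) + \<epsilon> \<le> h \<sigma>) \<and>
        (\<forall>p \<sigma>l \<sigma>r. prob_succ \<sigma> p \<sigma>l \<sigma>r \<longrightarrow>
            real_of_rat p * h \<sigma>l + (1 - real_of_rat p) * h \<sigma>r + \<epsilon> \<le> h \<sigma>))"

text \<open>Ordinals are represented by well-orders (on nat: countable ordinals suffice,
  since all program states form a countable set).\<close>
definition ord_zero :: "nat rel \<Rightarrow> nat" where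
  "ord_zero r = (THE x. x \<in> Field r \<and> (\<forall>y\<in>Field r. (x, y) \<in> r))"

definition ord_less :: "nat rel \<Rightarrow> nat \<Rightarrow> nat \<Rightarrow> bool" where
  "ord_less r x y \<longleftrightarrow> (x, y) \<in> r \<and> x \<noteq> y"

end

theory Submission
  imports Defs "HOL-Library.Bourbaki_Witt_Fixpoint"
begin

text \<open>Call a state \<open>x\<close> finite over a set \<open>B\<close> if the expected number of steps from \<open>x\<close>
  until \<open>B\<close> is reached is bounded over all schedulers, and let \<open>extend B\<close> add to \<open>B\<close> the
  states finite over it. Starting from the terminal states and iterating \<open>extend\<close>
  transfinitely, with unions at limits, gives a well-ordered tower of sets closed under
  the successor relation, whose union \<open>L\<close> is a fixpoint. If \<open>P\<close> could reach a state
  outside \<open>L\<close>, a scheduler would exist that, from there, plays optimal finite-horizon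
  strategies in stages, each stage adding at least one to the expected runtime, so
  \<open>P \<notin> PAST\<close>. Hence every state \<open>\<sigma>\<close> reachable from \<open>P\<close> is finite over its rank set \<open>Y\<close>,
  the union of the tower sets not containing \<open>\<sigma>\<close>. The maximal expected runtime to \<open>Y\<close>,
  restricted to the states reachable from \<open>\<sigma>\<close>, satisfies the Bellman inequality and is
  therefore an RSM-map with \<open>\<epsilon> = 1\<close>; it vanishes exactly on the states of smaller rank.
  Only countably many states are reachable, so the rank sets form a countable well-ordered
  chain, which is encoded as a well-order on \<open>nat\<close>.\<close>

section \<open>Countable well-ordered chains of sets as ordinals\<close>

lemma Well_order_subset_chain:
  fixes Q :: "'a set set"
  assumes chain: "\<And>A B. A \<in> Q \<Longrightarrow> B \<in> Q \<Longrightarrow> A \<subseteq> B \<or> B \<subseteq> A"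
    and least: "\<And>S. S \<subseteq> Q \<Longrightarrow> S \<noteq> {} \<Longrightarrow> \<exists>A\<in>S. \<forall>B\<in>S. A \<subseteq> B"
  shows "Well_order {(A, B). A \<in> Q \<and> B \<in> Q \<and> A \<subseteq> B}" (is "Well_order ?r")
    and "Field {(A, B). A \<in> Q \<and> B \<in> Q \<and> A \<subseteq> B} = Q"
proof -
  show field: "Field ?r = Q" by (auto simp: Field_def)
  have "Linear_order ?r"
    unfolding linear_order_on_def partial_order_on_def preorder_on_def field
  proof (intro conjI refl_onI transI antisymI total_onI)
    show "?r \<subseteq> Q \<times> Q" by blast
    show "x \<noteq> y \<Longrightarrow> (x, y) \<in> ?r \<or> (y, x) \<in> ?r" if "x \<in> Q" "y \<in> Q" for x y
      using chain[OF that] that by blast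
  qed auto
  moreover have "\<exists>A\<in>S. \<forall>B\<in>S. (A, B) \<in> ?r" if S: "S \<subseteq> Q" "S \<noteq> {}" for S
  proof -
    obtain A where "A \<in> S" "\<forall>B\<in>S. A \<subseteq> B" using least[OF S] by blast
    with S(1) show ?thesis by blast
  qed
  ultimately show "Well_order ?r"
    using Linear_order_Well_order_iff[of ?r] unfolding field by blast
qed

lemma ord_zero_eqI:
  assumes "Well_order r" "x \<in> Field r" "\<And>y. y \<in> Field r \<Longrightarrow> (x, y) \<in> r"
  shows "ord_zero r = x"
  unfolding ord_zero_def
proof (rule the_equality)
  fix z assume "z \<in> Field r \<and> (\<forall>y\<in>Field r. (z, y) \<in> r)"
  with assms show "z = x" by (meson antisymD order_on_defs)
qed (use assms in blast)

lemma countable_subset_chain_ordinal: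
  fixes Q :: "'a set set"
  assumes "countable Q" "{} \<in> Q"
    and chain: "\<And>A B. A \<in> Q \<Longrightarrow> B \<in> Q \<Longrightarrow> A \<subseteq> B \<or> B \<subseteq> A"
    and least: "\<And>S. S \<subseteq> Q \<Longrightarrow> S \<noteq> {} \<Longrightarrow> \<exists>A\<in>S. \<forall>B\<in>S. A \<subseteq> B"
  obtains r :: "nat rel" and e where "Well_order r" "inj_on e Q" "Field r = e ` Q"
    "ord_zero r = e {}" "\<And>A B. A \<in> Q \<Longrightarrow> B \<in> Q \<Longrightarrow> ord_less r (e A) (e B) \<longleftrightarrow> A \<subset> B"
proof
  let ?s = "{(A, B). A \<in> Q \<and> B \<in> Q \<and> A \<subseteq> B}"
  let ?e = "to_nat_on Q"
  let ?r = "dir_image ?s ?e"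
  show inj: "inj_on ?e Q" using assms(1) by (rule inj_on_to_nat_on)
  show wo: "Well_order ?r"
    using Well_order_subset_chain[OF chain least] inj by (simp add: Well_order_dir_image)
  show field: "Field ?r = ?e ` Q"
    using Well_order_subset_chain(2)[OF chain least] by (simp add: dir_image_Field)
  have mem: "(?e A, ?e B) \<in> ?r \<longleftrightarrow> A \<subseteq> B" if "A \<in> Q" "B \<in> Q" for A B
    using that inj_on_eq_iff[OF inj] unfolding dir_image_def by blast
  show "ord_zero ?r = ?e {}"
    using wo field mem assms(2) by (intro ord_zero_eqI) auto
  show "ord_less ?r (?e A) (?e B) \<longleftrightarrow> A \<subset> B" if "A \<in> Q" "B \<in> Q" for A B
    using mem[OF that] inj_on_eq_iff[OF inj that] unfolding ord_less_def by auto
qed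

section \<open>Towers of an inflationary operator on sets\<close>

locale inflationary_tower =
  fixes F :: "'a set \<Rightarrow> 'a set" and B :: "'a set"
  assumes inflationary: "X \<subseteq> F X"
begin

sublocale bw: bourbaki_witt_fixpoint Sup "{(X, Y). X \<subseteq> Y}" F
  by (rule bourbaki_witt_fixpoint_complete_latticeI) (rule inflationary)

text \<open>The tower is the least family containing \<open>B\<close> and closed under \<open>F\<close> and under unions
  of chains.\<close>

abbreviation tower :: "'a set set" where
  "tower \<equiv> bw.iterates_above B"

definition limit :: "'a set" where
  "limit = \<Union>tower"

definition rank_set :: "'a \<Rightarrow> 'a set" where
  "rank_set x = \<Union>{Z \<in> tower. x \<notin> Z}"

lemma Field_subset_rel [simp]: "Field {(X, Y :: 'a set). X \<subseteq> Y} = UNIV"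
  by (auto simp: Field_def)

lemma base_subset_tower: "X \<in> tower \<Longrightarrow> B \<subseteq> X"
  using bw.iterates_above_ge by simp

lemma tower_linear: "X \<in> tower \<Longrightarrow> Y \<in> tower \<Longrightarrow> X \<subseteq> Y \<or> Y \<subseteq> X"
  using in_ChainsD[OF bw.chain_iterates_above] by simp

lemma tower_Union:
  assumes "C \<subseteq> tower" "C \<noteq> {}"
  shows "\<Union>C \<in> tower"
proof -
  have "C \<in> Chains {(X, Y). X \<subseteq> Y}"
    using in_Chains_subset[OF bw.chain_iterates_above assms(1)] by simp
  then show ?thesis using bw.iterates_above.Sup[of C B] assms by blast
qed

lemma tower_psubset_imp_step_subset:
  assumes "X \<in> tower" "Y \<in> tower" "X \<subset> Y"
  shows "F X \<subseteq> Y"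
proof -
  have "\<not> X \<in> bw.iterates_above Y"
    using bw.iterates_above_ge[of X Y] assms(3) by auto
  then have "Y \<in> bw.iterates_above X"
    using bw.iterates_above_triangle[OF assms(1,2)] by auto
  then have "Y \<in> bw.iterates_above (F X)"
    using bw.iterates_above_successor[of Y X] assms(3) by auto
  then show ?thesis using bw.iterates_above_ge[of Y "F X"] by simp
qed

lemma tower_subset_fixpoint:
  assumes "Y \<in> tower" "F Y \<subseteq> Y" "Z \<in> tower"
  shows "Z \<subseteq> Y"
  using assms(3)
proof (induction rule: bw.iterates_above.induct)
  case base
  then show ?case using base_subset_tower[OF assms(1)] .
next
  case (step X)
  then show ?case
    using tower_psubset_imp_step_subset[OF _ assms(1)] assms(2) by (cases "X = Y") auto
next
  case (Sup M)
  then show ?case by (simp add: Sup_le_iff)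
qed

lemma limit_in_tower: "limit \<in> tower"
  unfolding limit_def using bw.iterates_above.base by (intro tower_Union) auto

lemma F_limit: "F limit = limit"
  using bw.iterates_above.step[OF limit_in_tower] inflationary[of limit]
  unfolding limit_def by blast

lemma tower_has_least:
  assumes "A \<subseteq> tower" "A \<noteq> {}"
  shows "\<exists>X\<in>A. \<forall>Y\<in>A. X \<subseteq> Y"
proof -
  define L where "L = \<Union>{Z \<in> tower. \<forall>Y\<in>A. Z \<subseteq> Y}"
  have "B \<in> {Z \<in> tower. \<forall>Y\<in>A. Z \<subseteq> Y}"
    using assms(1) base_subset_tower bw.iterates_above.base by blast
  then have L_tower: "L \<in> tower" unfolding L_def by (intro tower_Union) auto
  have L_lower: "\<forall>Y\<in>A. L \<subseteq> Y" unfolding L_def by blast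
  show ?thesis
  proof (cases "L \<in> A")
    case True
    then show ?thesis using L_lower by blast
  next
    case False
    have "F L \<subseteq> Y" if "Y \<in> A" for Y
    proof -
      have "L \<subset> Y" using L_lower that False by blast
      then show ?thesis using tower_psubset_imp_step_subset[OF L_tower] assms(1) that by blast
    qed
    then have "F L \<in> {Z \<in> tower. \<forall>Y\<in>A. Z \<subseteq> Y}"
      using bw.iterates_above.step[OF L_tower] by blast
    then have "F L \<subseteq> L" unfolding L_def by (rule Union_upper)
    moreover obtain Y where "Y \<in> A" using assms(2) by blast
    ultimately have "Y \<subseteq> L" using tower_subset_fixpoint[OF L_tower] assms(1) by blast
    with \<open>Y \<in> A\<close> False L_lower show ?thesis by blast
  qed
qed

lemma rank_set_base: "x \<in> B \<Longrightarrow> rank_set x = {}"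
  unfolding rank_set_def using base_subset_tower by blast

lemma rank_set_in_tower: "x \<notin> B \<Longrightarrow> rank_set x \<in> tower"
  unfolding rank_set_def using bw.iterates_above.base by (intro tower_Union) auto

lemma base_subset_rank_set: "x \<notin> B \<Longrightarrow> B \<subseteq> rank_set x"
  unfolding rank_set_def using bw.iterates_above.base by blast

lemma not_in_rank_set: "x \<notin> rank_set x"
  unfolding rank_set_def by blast

lemma in_tower_iff_rank_set_psubset:
  assumes "Y \<in> tower"
  shows "x \<in> Y \<longleftrightarrow> rank_set x \<subset> Y"
proof
  assume "x \<in> Y"
  have "Z \<subseteq> Y" if "Z \<in> tower" "x \<notin> Z" for Z
    using tower_linear[OF that(1) assms] that(2) \<open>x \<in> Y\<close> by blast
  then have "rank_set x \<subseteq> Y" unfolding rank_set_def by blast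
  with \<open>x \<in> Y\<close> show "rank_set x \<subset> Y" using not_in_rank_set by blast
next
  assume "rank_set x \<subset> Y"
  show "x \<in> Y"
  proof (rule ccontr)
    assume "x \<notin> Y"
    then have "Y \<subseteq> rank_set x" unfolding rank_set_def using assms by blast
    with \<open>rank_set x \<subset> Y\<close> show False by blast
  qed
qed

lemma in_F_rank_set:
  assumes "x \<in> limit" "x \<notin> B"
  shows "x \<in> F (rank_set x)"
proof (rule ccontr)
  let ?R = "rank_set x"
  have R: "?R \<in> tower" using rank_set_in_tower[OF assms(2)] .
  assume "x \<notin> F ?R"
  with bw.iterates_above.step[OF R] have "F ?R \<in> {Z \<in> tower. x \<notin> Z}" by blast
  then have "F ?R \<subseteq> ?R" unfolding rank_set_def by (rule Union_upper)
  then have "limit \<subseteq> ?R" by (rule tower_subset_fixpoint[OF R _ limit_in_tower])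
  with assms(1) show False using not_in_rank_set by blast
qed

lemma countable_rank_ordinal:
  assumes "countable R"
  obtains r :: "nat rel" and g where "Well_order r" "\<And>x. x \<in> R \<Longrightarrow> g x \<in> Field r"
    "\<And>x. x \<in> R \<Longrightarrow> g x = ord_zero r \<longleftrightarrow> rank_set x = {}"
    "\<And>x y. x \<in> R \<Longrightarrow> y \<in> R \<Longrightarrow> ord_less r (g y) (g x) \<longleftrightarrow> rank_set y \<subset> rank_set x"
proof -
  define Q where "Q = insert {} (rank_set ` R)"
  have "rank_set x \<in> insert {} tower" for x
    by (cases "x \<in> B") (simp_all add: rank_set_base rank_set_in_tower)
  then have Q: "countable Q" "{} \<in> Q" "Q \<subseteq> insert {} tower"
    unfolding Q_def using assms by auto
  have rank_Q: "rank_set x \<in> Q" if "x \<in> R" for x using that unfolding Q_def by blast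
  have chain: "X \<subseteq> Y \<or> Y \<subseteq> X" if "X \<in> Q" "Y \<in> Q" for X Y
    using that Q(3) tower_linear by blast
  have least: "\<exists>X\<in>S. \<forall>Y\<in>S. X \<subseteq> Y" if "S \<subseteq> Q" "S \<noteq> {}" for S
  proof (cases "{} \<in> S")
    case False
    then have "S \<subseteq> tower" using that(1) Q(3) by blast
    then show ?thesis using that(2) by (rule tower_has_least)
  qed blast
  obtain r :: "nat rel" and e where r: "Well_order r" "inj_on e Q" "Field r = e ` Q"
    "ord_zero r = e {}" "\<And>X Y. X \<in> Q \<Longrightarrow> Y \<in> Q \<Longrightarrow> ord_less r (e X) (e Y) \<longleftrightarrow> X \<subset> Y"
    using countable_subset_chain_ordinal[OF Q(1,2) chain least] by blast
  show thesis
  proof (rule that[of r "\<lambda>x. e (rank_set x)"])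
    show "Well_order r" by (rule r(1))
    show "e (rank_set x) \<in> Field r" if "x \<in> R" for x
      unfolding r(3) using rank_Q[OF that] by (rule imageI)
    show "e (rank_set x) = ord_zero r \<longleftrightarrow> rank_set x = {}" if "x \<in> R" for x
      unfolding r(4) using inj_on_eq_iff[OF r(2) rank_Q[OF that] Q(2)] .
    show "ord_less r (e (rank_set y)) (e (rank_set x)) \<longleftrightarrow> rank_set y \<subset> rank_set x"
      if "x \<in> R" "y \<in> R" for x y
      using r(5)[OF rank_Q rank_Q] that by blast
  qed
qed

end

section \<open>Sums over lists and iterated list-valued successor functions\<close>

lemma sum_list_concat_map:
  "(\<Sum>y\<leftarrow>concat (map h xs). g y) = (\<Sum>x\<leftarrow>xs. \<Sum>y\<leftarrow>h x. g y)"
  by (induction xs) auto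

lemma sum_list_filter_concat_map:
  "(\<Sum>y\<leftarrow>filter P (concat (map h xs)). g y) = (\<Sum>x\<leftarrow>xs. \<Sum>y\<leftarrow>filter P (h x). g y)"
  by (induction xs) auto

lemma sum_list_partition:
  fixes g :: "'a \<Rightarrow> 'b::comm_monoid_add"
  shows "(\<Sum>x\<leftarrow>xs. g x) = (\<Sum>x\<leftarrow>filter P xs. g x) + (\<Sum>x\<leftarrow>filter (\<lambda>x. \<not> P x) xs. g x)"
  by (induction xs) (auto simp: algebra_simps)

lemma sum_list_filter_mono:
  fixes g :: "'a \<Rightarrow> 'b::ordered_comm_monoid_add"
  assumes "\<And>x. x \<in> set xs \<Longrightarrow> 0 \<le> g x" "\<And>x. P x \<Longrightarrow> Q x"
  shows "(\<Sum>x\<leftarrow>filter P xs. g x) \<le> (\<Sum>x\<leftarrow>filter Q xs. g x)"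
  using assms by (induction xs) (auto intro: add_mono add_increasing)

lemma sum_le_sum_list:
  fixes g :: "'a \<Rightarrow> 'b::ordered_comm_monoid_add"
  assumes "A \<subseteq> set xs" "\<And>x. x \<in> set xs \<Longrightarrow> 0 \<le> g x"
  shows "sum g A \<le> (\<Sum>x\<leftarrow>xs. g x)"
proof -
  have "sum g A \<le> sum g (set xs)"
    using assms by (intro sum_mono2) auto
  also have "\<dots> = (\<Sum>x\<leftarrow>remdups xs. g x)" by (rule sum.set_conv_list)
  also have "\<dots> \<le> (\<Sum>x\<leftarrow>xs. g x)"
    using assms(2) by (induction xs) (auto intro: add_increasing add_mono)
  finally show ?thesis .
qed

lemma of_rat_sum_list: "real_of_rat (\<Sum>x\<leftarrow>xs. g x) = (\<Sum>x\<leftarrow>xs. real_of_rat (g x))"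
  by (induction xs) (auto simp: of_rat_add)

lemma sum_sum_list_swap: "(\<Sum>j<m. \<Sum>x\<leftarrow>xs. g j x) = (\<Sum>x\<leftarrow>xs. \<Sum>j<m. g j x)"
  by (induction xs) (auto simp: sum.distrib)

lemma tendsto_sum_list:
  fixes F :: "nat \<Rightarrow> 'a \<Rightarrow> real"
  shows "(\<And>e. e \<in> set xs \<Longrightarrow> (\<lambda>n. F n e) \<longlonglongrightarrow> G e) \<Longrightarrow>
    (\<lambda>n. \<Sum>e\<leftarrow>xs. F n e) \<longlonglongrightarrow> (\<Sum>e\<leftarrow>xs. G e)"
  by (induction xs) (auto intro!: tendsto_add)

primrec kleisli_pow :: "('a \<Rightarrow> 'a list) \<Rightarrow> nat \<Rightarrow> 'a \<Rightarrow> 'a list" where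
  "kleisli_pow S 0 x = [x]"
| "kleisli_pow S (Suc n) x = concat (map (kleisli_pow S n) (S x))"

lemma kleisli_pow_add:
  "kleisli_pow S (m + n) x = concat (map (kleisli_pow S n) (kleisli_pow S m x))"
proof (induction m arbitrary: x)
  case 0
  then show ?case by simp
next
  case (Suc m)
  have "concat (map (\<lambda>y. concat (map g (h y))) xs) = concat (map g (concat (map h xs)))"
    for g :: "'a \<Rightarrow> 'a list" and h xs
    by (induction xs) auto
  then show ?case by (simp add: Suc.IH[abs_def])
qed

lemma kleisli_pow_Suc_right: "kleisli_pow S (Suc n) x = concat (map S (kleisli_pow S n x))"
proof -
  have "concat (map (\<lambda>y. [y]) xs) = xs" for xs :: "'a list" by (induction xs) auto
  moreover have "kleisli_pow S 0 = (\<lambda>y. [y])" by (intro ext) simp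
  ultimately have "kleisli_pow S 1 = S" by (intro ext) simp
  then show ?thesis using kleisli_pow_add[of S n 1] by simp
qed

section \<open>One-step semantics as successor lists\<close>

fun nd_redex :: "prog \<Rightarrow> bool" where
  "nd_redex (NChoice P1 P2) = True"
| "nd_redex (Seq P1 P2) = (P1 \<noteq> Bot \<and> nd_redex P1)"
| "nd_redex _ = False"

text \<open>The successors of \<open>(P, \<eta>)\<close> when the scheduler answers \<open>d\<close>, each with the factor by which
  it multiplies the path probability and the letters it appends to the history.\<close>

fun succs :: "dir \<Rightarrow> prog \<Rightarrow> valuation \<Rightarrow> (prog \<times> valuation \<times> rat \<times> dir list) list" where
  "succs d Bot \<eta> = []"
| "succs d (Assign v e) \<eta> = [(Bot, \<eta>(v := aval e \<eta>), 1, [])]"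
| "succs d (Seq P1 P2) \<eta> = (if P1 = Bot then [(P2, \<eta>, 1, [])]
     else map (\<lambda>(P', \<eta>', a, ds). (Seq P' P2, \<eta>', a, ds)) (succs d P1 \<eta>))"
| "succs d (PChoice P1 p P2) \<eta> = (if aval p \<eta> \<le> 0 then [(P2, \<eta>, 1, [Rp])]
     else if 1 \<le> aval p \<eta> then [(P1, \<eta>, 1, [Lp])]
     else [(P1, \<eta>, aval p \<eta>, [Lp]), (P2, \<eta>, 1 - aval p \<eta>, [Rp])])"
| "succs d (NChoice P1 P2) \<eta> = (if d = Ln then [(P1, \<eta>, 1, [Ln])]
     else if d = Rn then [(P2, \<eta>, 1, [Rn])] else [])"
| "succs d (While b P) \<eta> =
     (if bval b \<eta> then [(Seq P (While b P), \<eta>, 1, [])] else [(Bot, \<eta>, 1, [])])"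

definition trace :: "estate \<Rightarrow> dir list" where
  "trace s = snd (snd (snd s))"

definition pstate_of :: "estate \<Rightarrow> pstate" where
  "pstate_of s = (fst s, fst (snd s))"

definition step_succs :: "sched \<Rightarrow> estate \<Rightarrow> estate list" where
  "step_succs f s = map (\<lambda>(P', \<eta>', a, ds). (P', \<eta>', Prob s * a, trace s @ ds))
     (succs (f (trace s)) (fst s) (fst (snd s)))"

lemma step_imp_in_step_succs: "step f s u \<Longrightarrow> u \<in> set (step_succs f s)"
proof (induction rule: step.induct)
  case (seq P1 \<eta> a w P1' \<eta>' a' w' P2)
  then have "P1 \<noteq> Bot" by (auto simp: step_succs_def)
  with seq show ?case by (force simp: step_succs_def trace_def Prob_def)
qed (auto simp: step_succs_def trace_def Prob_def)

lemma in_step_succs_imp_step: "u \<in> set (step_succs f (P, \<eta>, a, w)) \<Longrightarrow> step f (P, \<eta>, a, w) u"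
proof (induction P arbitrary: u)
  case (Seq P1 P2)
  show ?case
  proof (cases "P1 = Bot")
    case True
    then show ?thesis
      using Seq.prems by (auto simp: step_succs_def trace_def Prob_def intro: step.intros)
  next
    case False
    then obtain P' \<eta>' m ds where succ: "(P', \<eta>', m, ds) \<in> set (succs (f w) P1 \<eta>)"
      and u: "u = (Seq P' P2, \<eta>', a * m, w @ ds)"
      using Seq.prems by (auto simp: step_succs_def trace_def Prob_def)
    have "step f (P1, \<eta>, a, w) (P', \<eta>', a * m, w @ ds)"
      using Seq.IH(1) succ by (force simp: step_succs_def trace_def Prob_def)
    then show ?thesis unfolding u by (rule step.seq)
  qed
qed (auto simp: step_succs_def trace_def Prob_def split: if_splits intro: step.intros)

lemma step_iff_in_step_succs: "step f s u \<longleftrightarrow> u \<in> set (step_succs f s)"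
  by (cases s) (blast intro: step_imp_in_step_succs in_step_succs_imp_step)

lemma step_succs_init: "step_succs f (init \<sigma>) = succs (f []) (fst \<sigma>) (snd \<sigma>)"
  by (simp add: step_succs_def init_def trace_def Prob_def split_def)

lemma succs_shape:
  "succs d P \<eta> = [] \<or> (\<exists>P' \<eta>' ds. succs d P \<eta> = [(P', \<eta>', 1, ds)]) \<or>
   (\<exists>P1 \<eta>1 P2 \<eta>2 q. 0 < q \<and> q < 1 \<and> succs d P \<eta> = [(P1, \<eta>1, q, [Lp]), (P2, \<eta>2, 1 - q, [Rp])])"
  by (induction P) auto

lemma succs_prob_pos: "(P', \<eta>', a, ds) \<in> set (succs d P \<eta>) \<Longrightarrow> 0 < a"
  using succs_shape[of d P \<eta>] by auto

lemma succs_prob_one: "(P', \<eta>', 1, ds) \<in> set (succs d P \<eta>) \<Longrightarrow> succs d P \<eta> = [(P', \<eta>', 1, ds)]"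
  using succs_shape[of d P \<eta>] by auto

lemma succs_mass_le_1: "(\<Sum>(_, _, a, _)\<leftarrow>succs d P \<eta>. a) \<le> 1"
  using succs_shape[of d P \<eta>] by auto

lemma succs_distinct_letters:
  assumes "e1 \<in> set (succs d P \<eta>)" "e2 \<in> set (succs d P \<eta>)" "e1 \<noteq> e2"
  shows "\<exists>x1 x2. x1 \<noteq> x2 \<and> snd (snd (snd e1)) = [x1] \<and> snd (snd (snd e2)) = [x2]"
  using succs_shape[of d P \<eta>] assms by auto

lemma succs_sched_indep: "\<not> nd_redex P \<Longrightarrow> succs d P \<eta> = succs d' P \<eta>"
  by (induction P) auto

lemma succs_nd_redex:
  "nd_redex P \<Longrightarrow> \<exists>Pl Pr. \<forall>d. succs d P \<eta> =
     (if d = Ln then [(Pl, \<eta>, 1, [Ln])] else if d = Rn then [(Pr, \<eta>, 1, [Rn])] else [])"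
proof (induction P)
  case (Seq P1 P2)
  then obtain Pl Pr where "\<forall>d. succs d P1 \<eta> =
     (if d = Ln then [(Pl, \<eta>, 1, [Ln])] else if d = Rn then [(Pr, \<eta>, 1, [Rn])] else [])"
    by auto
  with Seq.prems show ?case by (intro exI[of _ "Seq Pl P2"] exI[of _ "Seq Pr P2"]) auto
qed auto

lemma succs_letters_nd_redex:
  "nd_redex P \<Longrightarrow> (P', \<eta>', a, ds) \<in> set (succs d P \<eta>) \<Longrightarrow> ds = [d] \<and> d \<in> {Ln, Rn}"
  using succs_nd_redex[of P \<eta>] by (cases d) auto

lemma succs_letters_not_nd_redex:
  "\<not> nd_redex P \<Longrightarrow> (P', \<eta>', a, ds) \<in> set (succs d P \<eta>) \<Longrightarrow> ds \<in> {[], [Lp], [Rp]}"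
  by (induction P arbitrary: P' \<eta>' a ds) (auto split: if_splits)

section \<open>The successor relation on program states\<close>

definition succ_rel :: "pstate rel" where
  "succ_rel = {(x, y). \<exists>d a ds. (fst y, snd y, a, ds) \<in> set (succs d (fst x) (snd x))}"

definition succ_closed :: "pstate set \<Rightarrow> bool" where
  "succ_closed X \<longleftrightarrow> succ_rel `` X \<subseteq> X"

lemma succ_closed_rtrancl:
  assumes "succ_closed X" "(x, y) \<in> succ_rel\<^sup>*" "x \<in> X"
  shows "y \<in> X"
  using assms(2,3) by induction (use assms(1) in \<open>auto simp: succ_closed_def\<close>)

lemma step_succ_rel: "step f s u \<Longrightarrow> (pstate_of s, pstate_of u) \<in> succ_rel"
  by (fastforce simp: step_iff_in_step_succs step_succs_def succ_rel_def pstate_of_def)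

lemma steps_succ_rel: "steps f n s t \<Longrightarrow> (pstate_of s, pstate_of t) \<in> succ_rel\<^sup>*"
proof (induction n arbitrary: s)
  case (Suc n)
  then obtain u where "step f s u" "steps f n u t" by auto
  with Suc.IH show ?case by (blast intro: converse_rtrancl_into_rtrancl step_succ_rel)
qed simp

lemma Reach_succ_rel: "\<sigma>' \<in> Reach \<sigma> \<Longrightarrow> (\<sigma>, \<sigma>') \<in> succ_rel\<^sup>+"
proof -
  assume "\<sigma>' \<in> Reach \<sigma>"
  then obtain f a' w' n where "1 \<le> n" "steps f n (init \<sigma>) (fst \<sigma>', snd \<sigma>', a', w')"
    unfolding Reach_def by blast
  moreover from \<open>1 \<le> n\<close> obtain n' where "n = Suc n'" by (cases n) auto
  ultimately obtain u where u: "step f (init \<sigma>) u" "steps f n' u (fst \<sigma>', snd \<sigma>', a', w')" by auto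
  have "(pstate_of (init \<sigma>), pstate_of u) \<in> succ_rel" by (rule step_succ_rel[OF u(1)])
  moreover have "(pstate_of u, pstate_of (fst \<sigma>', snd \<sigma>', a', w')) \<in> succ_rel\<^sup>*"
    by (rule steps_succ_rel[OF u(2)])
  ultimately show ?thesis by (simp add: pstate_of_def init_def rtrancl_into_trancl2)
qed

lemma succ_closed_rtrancl_Image: "succ_closed (succ_rel\<^sup>* `` X)"
  unfolding succ_closed_def
proof
  fix y assume "y \<in> succ_rel `` (succ_rel\<^sup>* `` X)"
  then obtain x z where "x \<in> X" "(x, z) \<in> succ_rel\<^sup>*" "(z, y) \<in> succ_rel" by blast
  then show "y \<in> succ_rel\<^sup>* `` X" by (blast intro: rtrancl_into_rtrancl)
qed

lemma Reach_subset_succ_closed: "succ_closed X \<Longrightarrow> \<sigma> \<in> X \<Longrightarrow> Reach \<sigma> \<subseteq> X"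
  using Reach_succ_rel succ_closed_rtrancl by (blast dest: trancl_into_rtrancl)

lemma succ_rel_iff: "(x, y) \<in> succ_rel \<longleftrightarrow>
    (\<exists>d\<in>{Ln, Rn}. \<exists>a ds. (fst y, snd y, a, ds) \<in> set (succs d (fst x) (snd x)))"
proof -
  have "\<exists>d'\<in>{Ln, Rn}. e \<in> set (succs d' (fst x) (snd x))"
    if "e \<in> set (succs d (fst x) (snd x))" for d e
  proof (cases "nd_redex (fst x)")
    case True
    then show ?thesis using that succs_nd_redex[OF True, of "snd x"] by (cases d) auto
  next
    case False
    then show ?thesis using that succs_sched_indep[OF False, of d "snd x" Ln] by auto
  qed
  then show ?thesis unfolding succ_rel_def by blast
qed

lemma finite_succ_rel_Image: "finite (succ_rel `` {x})"
proof -
  have "succ_rel `` {x} \<subseteq> (\<lambda>(P, \<eta>, _). (P, \<eta>)) ` (\<Union>d\<in>{Ln, Rn}. set (succs d (fst x) (snd x)))"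
  proof
    fix y assume "y \<in> succ_rel `` {x}"
    then obtain d a ds where "d \<in> {Ln, Rn}" "(fst y, snd y, a, ds) \<in> set (succs d (fst x) (snd x))"
      by (auto simp: succ_rel_iff)
    then show "y \<in> (\<lambda>(P, \<eta>, _). (P, \<eta>)) ` (\<Union>d\<in>{Ln, Rn}. set (succs d (fst x) (snd x)))"
      by (auto intro!: rev_image_eqI)
  qed
  then show ?thesis by (rule finite_subset) auto
qed

lemma countable_succ_rel_rtrancl_Image: "countable (succ_rel\<^sup>* `` {x})"
proof (rule countable_rtrancl)
  fix Y :: "pstate set" assume "countable Y"
  have "succ_rel `` Y = (\<Union>y\<in>Y. succ_rel `` {y})" by blast
  then show "countable (succ_rel `` Y)"
    using \<open>countable Y\<close> finite_succ_rel_Image by (simp add: countable_finite)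
qed simp

definition terminals :: "pstate set" where
  "terminals = {\<sigma>. terminal \<sigma>}"

lemma succ_closed_terminals: "succ_closed terminals"
  unfolding succ_closed_def terminals_def terminal_def succ_rel_def by auto

section \<open>Value iteration for the maximal expected runtime\<close>

definition exp_val :: "dir \<Rightarrow> (pstate \<Rightarrow> real) \<Rightarrow> pstate \<Rightarrow> real" where
  "exp_val d G x = (\<Sum>(P', \<eta>', a, _)\<leftarrow>succs d (fst x) (snd x). real_of_rat a * G (P', \<eta>'))"

definition max_exp_val :: "(pstate \<Rightarrow> real) \<Rightarrow> pstate \<Rightarrow> real" where
  "max_exp_val G x =
     (if nd_redex (fst x) then max (exp_val Ln G x) (exp_val Rn G x) else exp_val Ln G x)"

text \<open>The largest expected number of steps, among the first \<open>n\<close>, taken before \<open>B\<close> is entered.\<close>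

primrec horizon_runtime :: "nat \<Rightarrow> pstate set \<Rightarrow> pstate \<Rightarrow> real" where
  "horizon_runtime 0 B x = 0"
| "horizon_runtime (Suc n) B x =
     (if x \<in> B then 0 else 1 + max_exp_val (horizon_runtime n B) x)"

definition finite_runtime :: "pstate set \<Rightarrow> pstate \<Rightarrow> bool" where
  "finite_runtime B x \<longleftrightarrow> bdd_above (range (\<lambda>n. horizon_runtime n B x))"

definition max_runtime :: "pstate set \<Rightarrow> pstate \<Rightarrow> real" where
  "max_runtime B x = (SUP n. horizon_runtime n B x)"

lemma exp_val_mono:
  "(\<And>y. (x, y) \<in> succ_rel \<Longrightarrow> G y \<le> H y) \<Longrightarrow> exp_val d G x \<le> exp_val d H x"
  unfolding exp_val_def
  by (rule sum_list_mono) (force intro: mult_left_mono dest: succs_prob_pos simp: succ_rel_def)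

lemma exp_val_nonneg: "(\<And>y. (x, y) \<in> succ_rel \<Longrightarrow> 0 \<le> G y) \<Longrightarrow> 0 \<le> exp_val d G x"
  using exp_val_mono[of x "\<lambda>_. 0" G d] by (simp add: exp_val_def split_def)

lemma exp_val_le_max_exp_val: "d \<in> {Ln, Rn} \<Longrightarrow> exp_val d G x \<le> max_exp_val G x"
  using succs_sched_indep[of "fst x" d "snd x" Ln] by (auto simp: max_exp_val_def exp_val_def)

lemma max_exp_val_mono:
  "(\<And>y. (x, y) \<in> succ_rel \<Longrightarrow> G y \<le> H y) \<Longrightarrow> max_exp_val G x \<le> max_exp_val H x"
proof -
  assume "\<And>y. (x, y) \<in> succ_rel \<Longrightarrow> G y \<le> H y"
  then have le: "exp_val d G x \<le> exp_val d H x" for d by (rule exp_val_mono)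
  show ?thesis using le[of Ln] le[of Rn] by (auto simp: max_exp_val_def max_def)
qed

lemma max_exp_val_nonneg: "(\<And>y. (x, y) \<in> succ_rel \<Longrightarrow> 0 \<le> G y) \<Longrightarrow> 0 \<le> max_exp_val G x"
  using exp_val_nonneg[of x G] by (auto simp: max_exp_val_def le_max_iff_disj)

lemma max_exp_val_argmax:
  "max_exp_val G x = exp_val (if exp_val Ln G x < exp_val Rn G x then Rn else Ln) G x"
  using succs_sched_indep[of "fst x" Ln "snd x" Rn]
  by (auto simp: max_exp_val_def exp_val_def max_def)

lemma exp_val_const_1_le: "exp_val d (\<lambda>_. 1) x \<le> 1"
proof -
  have "exp_val d (\<lambda>_. 1) x = real_of_rat (\<Sum>(_, _, a, _)\<leftarrow>succs d (fst x) (snd x). a)"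
    unfolding exp_val_def of_rat_sum_list by (simp add: split_def)
  also have "\<dots> \<le> 1" using succs_mass_le_1 of_rat_less_eq by fastforce
  finally show ?thesis .
qed

lemma max_exp_val_ge_succ:
  assumes "(x, y) \<in> succ_rel"
  obtains c where "c > 0" "\<And>G. (\<And>z. 0 \<le> G z) \<Longrightarrow> c * G y \<le> max_exp_val G x"
proof -
  obtain d a ds where succ: "(fst y, snd y, a, ds) \<in> set (succs d (fst x) (snd x))" "d \<in> {Ln, Rn}"
    using assms by (auto simp: succ_rel_iff)
  have "real_of_rat a * G y \<le> max_exp_val G x" if "\<And>z. 0 \<le> G z" for G
  proof -
    let ?terms = "map (\<lambda>(P', \<eta>', a, _). real_of_rat a * G (P', \<eta>')) (succs d (fst x) (snd x))"
    have "real_of_rat a * G y \<in> set ?terms" using succ(1) by force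
    moreover have "0 \<le> t" if "t \<in> set ?terms" for t
      using that \<open>\<And>z. 0 \<le> G z\<close> by (auto dest!: succs_prob_pos)
    ultimately have "real_of_rat a * G y \<le> exp_val d G x"
      unfolding exp_val_def by (rule member_le_sum_list)
    then show ?thesis using exp_val_le_max_exp_val[OF succ(2), of G x] by linarith
  qed
  moreover have "0 < real_of_rat a" using succs_prob_pos[OF succ(1)] by simp
  ultimately show thesis using that by blast
qed

lemma horizon_runtime_nonneg: "0 \<le> horizon_runtime n B x"
  by (induction n arbitrary: x) (auto intro!: max_exp_val_nonneg add_nonneg_nonneg)

lemma horizon_runtime_Suc_mono: "horizon_runtime n B x \<le> horizon_runtime (Suc n) B x"
proof (induction n arbitrary: x)
  case 0
  then show ?case using horizon_runtime_nonneg[of "Suc 0" B x] by simp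
next
  case (Suc n)
  then show ?case by (auto intro!: max_exp_val_mono)
qed

lemma horizon_runtime_in: "x \<in> B \<Longrightarrow> horizon_runtime n B x = 0"
  by (cases n) auto

lemma horizon_runtime_1: "x \<notin> B \<Longrightarrow> horizon_runtime 1 B x = 1"
  by (simp add: max_exp_val_def exp_val_def split_def)

lemma exp_val_horizon_runtime_in:
  assumes "succ_closed B" "x \<in> B"
  shows "exp_val d (horizon_runtime m B) x = 0"
proof -
  have "exp_val d (horizon_runtime m B) x \<le> exp_val d (\<lambda>_. 0) x"
    using assms by (intro exp_val_mono) (auto simp: succ_closed_def horizon_runtime_in)
  moreover have "0 \<le> exp_val d (horizon_runtime m B) x"
    by (intro exp_val_nonneg horizon_runtime_nonneg)
  ultimately show ?thesis by (simp add: exp_val_def split_def)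
qed

lemma horizon_runtime_le_max_runtime: "finite_runtime B x \<Longrightarrow> horizon_runtime n B x \<le> max_runtime B x"
  unfolding finite_runtime_def max_runtime_def by (rule cSUP_upper) auto

lemma horizon_runtime_tendsto:
  "finite_runtime B x \<Longrightarrow> (\<lambda>n. horizon_runtime n B x) \<longlonglongrightarrow> max_runtime B x"
  unfolding finite_runtime_def max_runtime_def
  by (rule LIMSEQ_incseq_SUP) (auto intro: incseq_SucI horizon_runtime_Suc_mono)

lemma finite_runtime_in: "x \<in> B \<Longrightarrow> finite_runtime B x"
  by (simp add: finite_runtime_def horizon_runtime_in)

lemma max_runtime_nonneg: "finite_runtime B x \<Longrightarrow> 0 \<le> max_runtime B x"
  using horizon_runtime_le_max_runtime[of B x 0] by simp

lemma max_runtime_ge_1: "finite_runtime B x \<Longrightarrow> x \<notin> B \<Longrightarrow> 1 \<le> max_runtime B x"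
  using horizon_runtime_le_max_runtime[of B x 1] horizon_runtime_1[of x B] by simp

lemma finite_runtime_succ:
  assumes "x \<notin> B" "finite_runtime B x" "(x, y) \<in> succ_rel"
  shows "finite_runtime B y"
proof -
  obtain c where c: "c > 0" "\<And>G. (\<And>z. 0 \<le> G z) \<Longrightarrow> c * G y \<le> max_exp_val G x"
    using max_exp_val_ge_succ[OF assms(3)] by blast
  have "horizon_runtime n B y \<le> max_runtime B x / c" for n
  proof -
    have "c * horizon_runtime n B y \<le> max_exp_val (horizon_runtime n B) x"
      using c(2) horizon_runtime_nonneg by blast
    also have "\<dots> \<le> horizon_runtime (Suc n) B x" using assms(1) by simp
    also have "\<dots> \<le> max_runtime B x" using horizon_runtime_le_max_runtime[OF assms(2)] .
    finally show ?thesis using c(1) by (simp add: field_simps)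
  qed
  then show ?thesis unfolding finite_runtime_def by (intro bdd_aboveI2) auto
qed

lemma max_exp_val_horizon_runtime_tendsto:
  assumes "\<And>y. (x, y) \<in> succ_rel \<Longrightarrow> finite_runtime B y"
  shows "(\<lambda>n. max_exp_val (horizon_runtime n B) x) \<longlonglongrightarrow> max_exp_val (max_runtime B) x"
proof -
  have "(\<lambda>n. exp_val d (horizon_runtime n B) x) \<longlonglongrightarrow> exp_val d (max_runtime B) x" for d
    unfolding exp_val_def
  proof (rule tendsto_sum_list)
    fix e assume e: "e \<in> set (succs d (fst x) (snd x))"
    obtain P' \<eta>' a ds where e_def: "e = (P', \<eta>', a, ds)" by (cases e)
    have "finite_runtime B (P', \<eta>')" using e assms unfolding e_def succ_rel_def by force
    then show "(\<lambda>n. case e of (P', \<eta>', a, _) \<Rightarrow> real_of_rat a * horizon_runtime n B (P', \<eta>'))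
        \<longlonglongrightarrow> (case e of (P', \<eta>', a, _) \<Rightarrow> real_of_rat a * max_runtime B (P', \<eta>'))"
      unfolding e_def by (auto intro!: tendsto_mult_left horizon_runtime_tendsto)
  qed
  then show ?thesis unfolding max_exp_val_def by (auto intro: tendsto_max)
qed

lemma max_runtime_bellman:
  assumes "x \<notin> B" "finite_runtime B x"
  shows "1 + max_exp_val (max_runtime B) x \<le> max_runtime B x"
proof -
  have lim: "(\<lambda>n. max_exp_val (horizon_runtime n B) x) \<longlonglongrightarrow> max_exp_val (max_runtime B) x"
    using finite_runtime_succ[OF assms] by (rule max_exp_val_horizon_runtime_tendsto)
  have "max_exp_val (horizon_runtime n B) x \<le> max_runtime B x - 1" for n
    using horizon_runtime_le_max_runtime[OF assms(2), of "Suc n"] assms(1) by simp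
  then have "max_exp_val (max_runtime B) x \<le> max_runtime B x - 1"
    by (intro LIMSEQ_le_const2[OF lim]) auto
  then show ?thesis by simp
qed

section \<open>A lower bound on the expected runtime\<close>

lemma steps_in_kleisli_pow: "steps f n s t \<Longrightarrow> t \<in> set (kleisli_pow (step_succs f) n s)"
proof (induction n arbitrary: s)
  case (Suc n)
  then obtain u where u: "step f s u" "steps f n u t" by auto
  have "t \<in> set (kleisli_pow (step_succs f) n u)" using Suc.IH[OF u(2)] .
  moreover have "u \<in> set (step_succs f s)" using u(1) by (simp add: step_iff_in_step_succs)
  ultimately show ?case by auto
qed simp

lemma Prob_step_succs_nonneg: "0 \<le> Prob s \<Longrightarrow> u \<in> set (step_succs f s) \<Longrightarrow> 0 \<le> Prob u"
  by (auto simp: step_succs_def Prob_def dest!: succs_prob_pos)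

lemma Prob_kleisli_pow_nonneg:
  "0 \<le> Prob s \<Longrightarrow> t \<in> set (kleisli_pow (step_succs f) n s) \<Longrightarrow> 0 \<le> Prob t"
proof (induction n arbitrary: s)
  case (Suc n)
  then obtain u where "u \<in> set (step_succs f s)" "t \<in> set (kleisli_pow (step_succs f) n u)" by auto
  with Suc show ?case by (blast dest: Prob_step_succs_nonneg)
qed simp

lemma step_succs_mass_le:
  assumes "0 \<le> Prob s"
  shows "(\<Sum>u\<leftarrow>step_succs f s. Prob u) \<le> (if terminal_e s then 0 else Prob s)"
proof -
  obtain P \<eta> a w where s: "s = (P, \<eta>, a, w)" by (cases s)
  have "(\<Sum>u\<leftarrow>step_succs f s. Prob u) = Prob s * (\<Sum>(_, _, a, _)\<leftarrow>succs (f w) P \<eta>. a)"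
    unfolding step_succs_def s
    by (simp add: Prob_def trace_def split_def sum_list_const_mult comp_def)
  also have "\<dots> \<le> Prob s" using succs_mass_le_1 assms by (simp add: mult_left_le)
  finally show ?thesis using s by (auto simp: terminal_e_def step_succs_def)
qed

definition exec_states :: "sched \<Rightarrow> pstate \<Rightarrow> nat \<Rightarrow> estate list" where
  "exec_states f \<sigma> n = kleisli_pow (step_succs f) n (init \<sigma>)"

definition live_mass :: "sched \<Rightarrow> pstate \<Rightarrow> nat \<Rightarrow> rat" where
  "live_mass f \<sigma> n = (\<Sum>s\<leftarrow>filter (\<lambda>s. \<not> terminal_e s) (exec_states f \<sigma> n). Prob s)"

definition terminated_mass :: "sched \<Rightarrow> pstate \<Rightarrow> nat \<Rightarrow> rat" where
  "terminated_mass f \<sigma> n = (\<Sum>s\<leftarrow>filter terminal_e (exec_states f \<sigma> n). Prob s)"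

lemma Prob_exec_states_nonneg: "s \<in> set (exec_states f \<sigma> n) \<Longrightarrow> 0 \<le> Prob s"
  unfolding exec_states_def
  by (erule Prob_kleisli_pow_nonneg[rotated]) (simp add: init_def Prob_def)

lemma live_mass_nonneg: "0 \<le> live_mass f \<sigma> n"
  unfolding live_mass_def
proof (rule sum_list_nonneg)
  fix p assume "p \<in> set (map Prob (filter (\<lambda>s. \<not> terminal_e s) (exec_states f \<sigma> n)))"
  then show "0 \<le> p" using Prob_exec_states_nonneg[of _ f \<sigma> n] by auto
qed

lemma terminated_mass_Suc_le:
  "terminated_mass f \<sigma> (Suc n) \<le> live_mass f \<sigma> n - live_mass f \<sigma> (Suc n)"
proof -
  have "terminated_mass f \<sigma> (Suc n) + live_mass f \<sigma> (Suc n) = (\<Sum>s\<leftarrow>exec_states f \<sigma> (Suc n). Prob s)"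
    unfolding terminated_mass_def live_mass_def by (rule sum_list_partition[symmetric])
  also have "\<dots> = (\<Sum>s\<leftarrow>exec_states f \<sigma> n. \<Sum>u\<leftarrow>step_succs f s. Prob u)"
    unfolding exec_states_def kleisli_pow_Suc_right sum_list_concat_map ..
  also have "\<dots> \<le> (\<Sum>s\<leftarrow>exec_states f \<sigma> n. if terminal_e s then 0 else Prob s)"
    using Prob_exec_states_nonneg step_succs_mass_le by (intro sum_list_mono) auto
  also have "\<dots> = live_mass f \<sigma> n"
    unfolding live_mass_def sum_list_map_filter'
    by (intro arg_cong[where f = sum_list] map_cong) auto
  finally show ?thesis by simp
qed

lemma terminated_mass_sum_le:
  "(\<Sum>n\<leftarrow>[1..<Suc k]. terminated_mass f \<sigma> n) \<le> live_mass f \<sigma> 0 - live_mass f \<sigma> k"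
proof (induction k)
  case (Suc k)
  then show ?case using terminated_mass_Suc_le[of f \<sigma> k] by simp
qed simp

lemma T_le_mass_le: "(\<Sum>\<tau>\<in>T_le k \<sigma> f. Prob \<tau>) \<le> 1 - live_mass f \<sigma> k"
proof -
  define xs where "xs = concat (map (\<lambda>n. filter terminal_e (exec_states f \<sigma> n)) [1..<Suc k])"
  have "T_le k \<sigma> f \<subseteq> set xs"
  proof
    fix \<tau> assume "\<tau> \<in> T_le k \<sigma> f"
    then obtain n where "1 \<le> n" "n \<le> k" "steps f n (init \<sigma>) \<tau>" "terminal_e \<tau>"
      by (auto simp: T_le_def)
    then have "\<tau> \<in> set (filter terminal_e (exec_states f \<sigma> n))" "n \<in> set [1..<Suc k]"
      by (auto simp: exec_states_def dest: steps_in_kleisli_pow)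
    then show "\<tau> \<in> set xs" unfolding xs_def set_concat set_map by blast
  qed
  then have "(\<Sum>\<tau>\<in>T_le k \<sigma> f. Prob \<tau>) \<le> (\<Sum>\<tau>\<leftarrow>xs. Prob \<tau>)"
    by (rule sum_le_sum_list) (auto simp: xs_def dest: Prob_exec_states_nonneg)
  also have "\<dots> = (\<Sum>n\<leftarrow>[1..<Suc k]. terminated_mass f \<sigma> n)"
    unfolding xs_def terminated_mass_def sum_list_concat_map ..
  also have "\<dots> \<le> live_mass f \<sigma> 0 - live_mass f \<sigma> k"
    by (rule terminated_mass_sum_le)
  also have "live_mass f \<sigma> 0 \<le> 1"
    by (simp add: live_mass_def exec_states_def init_def Prob_def)
  finally show ?thesis by simp
qed

lemma ExpRuntime_ge_live_mass:
  "ennreal (\<Sum>k<K. real_of_rat (live_mass f \<sigma> k)) \<le> ExpRuntime \<sigma> f"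
proof -
  define a where "a k = real_of_rat (1 - (\<Sum>\<tau>\<in>T_le k \<sigma> f. Prob \<tau>))" for k
  have "real_of_rat (live_mass f \<sigma> k) \<le> a k" for k
    unfolding a_def of_rat_less_eq using T_le_mass_le[of k \<sigma> f] by simp
  then have "(\<Sum>k<K. ennreal (real_of_rat (live_mass f \<sigma> k))) \<le> (\<Sum>k<K. ennreal (a k))"
    by (intro sum_mono ennreal_leI)
  moreover have "ennreal (\<Sum>k<K. real_of_rat (live_mass f \<sigma> k)) =
      (\<Sum>k<K. ennreal (real_of_rat (live_mass f \<sigma> k)))"
    by (rule sum_ennreal[symmetric]) (simp add: live_mass_nonneg)
  ultimately have "ennreal (\<Sum>k<K. real_of_rat (live_mass f \<sigma> k)) \<le> (\<Sum>k<K. ennreal (a k))"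
    by simp
  also have "\<dots> \<le> (\<Sum>k. ennreal (a k))" by (intro sum_le_suminf summableI) auto
  finally show ?thesis unfolding ExpRuntime_def a_def .
qed

lemma ExpRuntime_infinite:
  assumes "\<And>N::real. \<exists>K. N \<le> (\<Sum>k<K. real_of_rat (live_mass f \<sigma> k))"
  shows "ExpRuntime \<sigma> f = \<infinity>"
proof (cases "ExpRuntime \<sigma> f")
  case (real R)
  obtain K where "R + 1 \<le> (\<Sum>k<K. real_of_rat (live_mass f \<sigma> k))" using assms by blast
  then have "ennreal (R + 1) \<le> ExpRuntime \<sigma> f"
    using ExpRuntime_ge_live_mass[where K = K] ennreal_leI order_trans by blast
  with real show ?thesis by simp
qed simp

section \<open>A scheduler with infinite expected runtime\<close>

text \<open>From outside \<open>T\<close> the scheduler below proceeds in stages. A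
  stage starts at an execution state of probability \<open>b > 0\<close> outside \<open>T\<close>, takes the least horizon
  \<open>r\<close> with \<open>horizon_runtime r T \<ge> 1 / b + 1\<close>, and plays the optimal strategy for that horizon
  during \<open>r - 1\<close> steps. This spends expected time at least \<open>1\<close> outside \<open>T\<close> and leaves positive
  mass outside \<open>T\<close>, from which the next stages start. A configuration pairs an execution state
  with the remaining horizon of its stage.\<close>

type_synonym config = "estate \<times> nat"

locale divergent_region =
  fixes T :: "pstate set" and \<sigma>0 :: pstate
  assumes terminals_subset: "terminals \<subseteq> T"
    and closed: "succ_closed T"
    and unbounded: "\<And>x. x \<notin> T \<Longrightarrow> \<not> finite_runtime T x"
    and start_outside: "\<sigma>0 \<notin> T"
begin

text \<open>Outside stage starts the value of \<open>horizon\<close> is irrelevant.\<close>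

definition horizon :: "estate \<Rightarrow> nat" where
  "horizon s = (if pstate_of s \<notin> T \<and> 0 < Prob s
     then LEAST n. 1 / real_of_rat (Prob s) + 1 \<le> horizon_runtime n T (pstate_of s) else 2)"

definition choice :: "config \<Rightarrow> dir" where
  "choice c = (if exp_val Ln (horizon_runtime (snd c - 1) T) (pstate_of (fst c))
       < exp_val Rn (horizon_runtime (snd c - 1) T) (pstate_of (fst c)) then Rn else Ln)"

definition next_counter :: "estate \<Rightarrow> nat \<Rightarrow> nat" where
  "next_counter s q = (if q - 1 \<le> 1 then horizon s else q - 1)"

definition cfg_succs :: "config \<Rightarrow> config list" where
  "cfg_succs c = map (\<lambda>s'. (s', next_counter s' (snd c))) (step_succs (\<lambda>_. choice c) (fst c))"

abbreviation cfg_paths :: "nat \<Rightarrow> config \<Rightarrow> config list" where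
  "cfg_paths \<equiv> kleisli_pow cfg_succs"

definition cfg0 :: config where
  "cfg0 = (init \<sigma>0, horizon (init \<sigma>0))"

definition reachable_cfgs :: "config set" where
  "reachable_cfgs = {c. \<exists>k. c \<in> set (cfg_paths k cfg0)}"

text \<open>The definite description is proper by \<open>cfg_paths_trace_unique\<close>.\<close>

definition sched :: sched where
  "sched w = (if \<exists>c\<in>reachable_cfgs. nd_redex (fst (fst c)) \<and> trace (fst c) = w
     then choice (THE c. c \<in> reachable_cfgs \<and> nd_redex (fst (fst c)) \<and> trace (fst c) = w)
     else Ln)"

lemma choice_in: "choice c \<in> {Ln, Rn}"
  unfolding choice_def by auto

lemma sched_in_schedulers: "sched \<in> schedulers"
  unfolding schedulers_def sched_def using choice_in by auto

lemma cfg_succsE: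
  assumes "c' \<in> set (cfg_succs c)"
  obtains P' \<eta>' a ds
  where "(P', \<eta>', a, ds) \<in> set (succs (choice c) (fst (fst c)) (fst (snd (fst c))))"
    "fst c' = (P', \<eta>', Prob (fst c) * a, trace (fst c) @ ds)"
    "snd c' = next_counter (fst c') (snd c)"
  using assms unfolding cfg_succs_def step_succs_def by (auto simp: trace_def)

lemma cfg_succs_trace: "c' \<in> set (cfg_succs c) \<Longrightarrow> \<exists>v. trace (fst c') = trace (fst c) @ v"
  by (erule cfg_succsE) (simp add: trace_def)

lemma cfg_paths_trace: "c' \<in> set (cfg_paths k c) \<Longrightarrow> \<exists>v. trace (fst c') = trace (fst c) @ v"
proof (induction k arbitrary: c)
  case (Suc k)
  then obtain c'' where "c'' \<in> set (cfg_succs c)" "c' \<in> set (cfg_paths k c'')" by auto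
  with Suc.IH cfg_succs_trace show ?case by (metis append.assoc)
qed simp

lemma cfg_succs_nd_redex_trace:
  assumes "nd_redex (fst (fst c))" "c' \<in> set (cfg_succs c)"
  shows "length (trace (fst c')) = Suc (length (trace (fst c)))"
  using assms(2)
proof (rule cfg_succsE)
  fix P' \<eta>' a ds
  assume succ: "(P', \<eta>', a, ds) \<in> set (succs (choice c) (fst (fst c)) (fst (snd (fst c))))"
    and "fst c' = (P', \<eta>', Prob (fst c) * a, trace (fst c) @ ds)"
  moreover have "ds = [choice c]" using succs_letters_nd_redex[OF assms(1) succ] by simp
  ultimately show ?thesis by (simp add: trace_def)
qed

lemma cfg_succs_distinct_trace:
  assumes "c1 \<in> set (cfg_succs c)" "c2 \<in> set (cfg_succs c)" "c1 \<noteq> c2"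
  obtains x1 x2 where "x1 \<noteq> x2" "trace (fst c1) = trace (fst c) @ [x1]"
    "trace (fst c2) = trace (fst c) @ [x2]"
proof -
  obtain P1 \<eta>1 a1 ds1 where
    e1: "(P1, \<eta>1, a1, ds1) \<in> set (succs (choice c) (fst (fst c)) (fst (snd (fst c))))"
    "fst c1 = (P1, \<eta>1, Prob (fst c) * a1, trace (fst c) @ ds1)"
    "snd c1 = next_counter (fst c1) (snd c)"
    using assms(1) by (rule cfg_succsE)
  obtain P2 \<eta>2 a2 ds2 where
    e2: "(P2, \<eta>2, a2, ds2) \<in> set (succs (choice c) (fst (fst c)) (fst (snd (fst c))))"
    "fst c2 = (P2, \<eta>2, Prob (fst c) * a2, trace (fst c) @ ds2)"
    "snd c2 = next_counter (fst c2) (snd c)"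
    using assms(2) by (rule cfg_succsE)
  have "fst c1 \<noteq> fst c2"
  proof
    assume "fst c1 = fst c2"
    moreover have "snd c1 = snd c2" using e1(3) e2(3) \<open>fst c1 = fst c2\<close> by simp
    ultimately have "c1 = c2" by (simp add: prod_eq_iff)
    with assms(3) show False ..
  qed
  then have "(P1, \<eta>1, a1, ds1) \<noteq> (P2, \<eta>2, a2, ds2)" using e1(2) e2(2) by auto
  then show thesis
    using succs_distinct_letters[OF e1(1) e2(1)] e1(2) e2(2) that by (auto simp: trace_def)
qed

lemma cfg_paths_nd_redex_longer:
  assumes "nd_redex (fst (fst c))" "y \<in> set (cfg_paths (Suc k) c)"
  shows "length (trace (fst c)) < length (trace (fst y))"
proof -
  obtain c' where "c' \<in> set (cfg_succs c)" "y \<in> set (cfg_paths k c')" using assms(2) by auto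
  then show ?thesis using cfg_succs_nd_redex_trace[OF assms(1)] cfg_paths_trace[of y k c']
    by fastforce
qed

text \<open>Paths branch only where the histories receive distinct letters, and a step from a
  nondeterministic choice lengthens the history.\<close>

lemma cfg_paths_trace_unique:
  assumes "x \<in> set (cfg_paths k1 c)" "y \<in> set (cfg_paths k2 c)"
    and "nd_redex (fst (fst x))" "nd_redex (fst (fst y))" "trace (fst x) = trace (fst y)"
  shows "x = y"
  using assms
proof (induction k1 arbitrary: c k2)
  case 0
  then show ?case using cfg_paths_nd_redex_longer[of x y] by (cases k2) auto
next
  case (Suc k1)
  show ?case
  proof (cases k2)
    case 0
    then show ?thesis using Suc.prems cfg_paths_nd_redex_longer[of y x k1] by auto
  next
    case (Suc k2')
    from Suc.prems(1) obtain c1 where c1: "c1 \<in> set (cfg_succs c)" "x \<in> set (cfg_paths k1 c1)"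
      by auto
    from Suc.prems(2) Suc obtain c2 where c2: "c2 \<in> set (cfg_succs c)" "y \<in> set (cfg_paths k2' c2)"
      by auto
    show ?thesis
    proof (cases "c1 = c2")
      case True
      then show ?thesis using Suc.IH[OF c1(2) _ Suc.prems(3-5)] c2(2) by blast
    next
      case False
      then obtain x1 x2 where "x1 \<noteq> x2" "trace (fst c1) = trace (fst c) @ [x1]"
        "trace (fst c2) = trace (fst c) @ [x2]"
        using cfg_succs_distinct_trace[OF c1(1) c2(1)] by blast
      then show ?thesis
        using cfg_paths_trace[OF c1(2)] cfg_paths_trace[OF c2(2)] Suc.prems(5) by auto
    qed
  qed
qed

lemma reachable_cfgs_succ:
  assumes "c \<in> reachable_cfgs" "c' \<in> set (cfg_succs c)"
  shows "c' \<in> reachable_cfgs"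
proof -
  obtain k where "c \<in> set (cfg_paths k cfg0)" using assms(1) unfolding reachable_cfgs_def by blast
  then have "c' \<in> set (cfg_paths (Suc k) cfg0)"
    unfolding kleisli_pow_Suc_right using assms(2) by auto
  then show ?thesis unfolding reachable_cfgs_def by blast
qed

lemma cfg0_reachable: "cfg0 \<in> reachable_cfgs"
  unfolding reachable_cfgs_def by (auto intro: exI[of _ 0])

lemma sched_trace:
  assumes "c \<in> reachable_cfgs" "nd_redex (fst (fst c))"
  shows "sched (trace (fst c)) = choice c"
proof -
  have "(THE c'. c' \<in> reachable_cfgs \<and> nd_redex (fst (fst c')) \<and> trace (fst c') = trace (fst c))
      = c"
  proof (rule the_equality)
    fix c' assume "c' \<in> reachable_cfgs \<and> nd_redex (fst (fst c')) \<and> trace (fst c') = trace (fst c)"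
    with assms show "c' = c" unfolding reachable_cfgs_def by (blast intro: cfg_paths_trace_unique)
  qed (use assms in auto)
  then show ?thesis unfolding sched_def using assms by auto
qed

lemma cfg_succs_fst:
  assumes "c \<in> reachable_cfgs"
  shows "map fst (cfg_succs c) = step_succs sched (fst c)"
proof -
  have "succs (choice c) (fst (fst c)) \<eta> = succs (sched (trace (fst c))) (fst (fst c)) \<eta>" for \<eta>
    using sched_trace[OF assms] succs_sched_indep[of "fst (fst c)"]
    by (cases "nd_redex (fst (fst c))") auto
  then show ?thesis unfolding cfg_succs_def step_succs_def by (simp add: comp_def)
qed

lemma cfg_paths_fst:
  "c \<in> reachable_cfgs \<Longrightarrow> map fst (cfg_paths k c) = kleisli_pow (step_succs sched) k (fst c)"
proof (induction k arbitrary: c)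
  case (Suc k)
  have "map fst (cfg_paths (Suc k) c) = concat (map (\<lambda>c'. map fst (cfg_paths k c')) (cfg_succs c))"
    by (simp add: map_concat comp_def)
  also have "\<dots> = concat (map (\<lambda>c'. kleisli_pow (step_succs sched) k (fst c')) (cfg_succs c))"
    using Suc.IH reachable_cfgs_succ[OF Suc.prems]
    by (intro arg_cong[where f = concat] map_cong) auto
  also have "\<dots> = concat (map (kleisli_pow (step_succs sched) k) (map fst (cfg_succs c)))"
    by (simp add: comp_def)
  also have "\<dots> = kleisli_pow (step_succs sched) (Suc k) (fst c)"
    using cfg_succs_fst[OF Suc.prems] by simp
  finally show ?case .
qed simp

definition weight :: "config \<Rightarrow> real" where
  "weight c = real_of_rat (Prob (fst c))"

text \<open>Summed over \<open>j\<close>, \<open>mass_outside c j\<close> is the probability-weighted time spent outside \<open>T\<close>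
  after \<open>c\<close>.\<close>

definition mass_outside :: "config \<Rightarrow> nat \<Rightarrow> real" where
  "mass_outside c j = (\<Sum>c'\<leftarrow>filter (\<lambda>c'. pstate_of (fst c') \<notin> T) (cfg_paths j c). weight c')"

definition stage_start :: "config \<Rightarrow> bool" where
  "stage_start c \<longleftrightarrow> snd c = horizon (fst c) \<and> pstate_of (fst c) \<notin> T \<and> 0 < Prob (fst c)"

lemma mass_outside_0: "mass_outside c 0 = (if pstate_of (fst c) \<notin> T then weight c else 0)"
  by (simp add: mass_outside_def)

lemma mass_outside_Suc: "mass_outside c (Suc j) = (\<Sum>c'\<leftarrow>cfg_succs c. mass_outside c' j)"
  unfolding mass_outside_def kleisli_pow.simps(2) sum_list_filter_concat_map ..

lemma Prob_cfg_succs_nonneg: "0 \<le> Prob (fst c) \<Longrightarrow> c' \<in> set (cfg_succs c) \<Longrightarrow> 0 \<le> Prob (fst c')"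
  unfolding cfg_succs_def by (auto dest: Prob_step_succs_nonneg)

lemma Prob_cfg_paths_nonneg: "0 \<le> Prob (fst c) \<Longrightarrow> c' \<in> set (cfg_paths j c) \<Longrightarrow> 0 \<le> Prob (fst c')"
proof (induction j arbitrary: c)
  case (Suc j)
  then obtain c'' where "c'' \<in> set (cfg_succs c)" "c' \<in> set (cfg_paths j c'')" by auto
  with Suc show ?case by (blast dest: Prob_cfg_succs_nonneg)
qed simp

lemma mass_outside_nonneg: "0 \<le> Prob (fst c) \<Longrightarrow> 0 \<le> mass_outside c j"
  unfolding mass_outside_def weight_def
  by (rule sum_list_nonneg) (auto dest: Prob_cfg_paths_nonneg)

lemma sum_cfg_succs_weight:
  "(\<Sum>c'\<leftarrow>cfg_succs c. weight c' * G (pstate_of (fst c'))) =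
     weight c * exp_val (choice c) G (pstate_of (fst c))"
  unfolding cfg_succs_def step_succs_def exp_val_def weight_def
  by (simp add: comp_def split_def pstate_of_def Prob_def of_rat_mult mult.assoc
      flip: sum_list_const_mult)

lemma mass_outside_le_weight: "0 \<le> Prob (fst c) \<Longrightarrow> mass_outside c j \<le> weight c"
proof (induction j arbitrary: c)
  case 0
  then show ?case by (simp add: mass_outside_0 weight_def)
next
  case (Suc j)
  have "mass_outside c (Suc j) \<le> (\<Sum>c'\<leftarrow>cfg_succs c. weight c' * 1)"
    unfolding mass_outside_Suc using Suc Prob_cfg_succs_nonneg by (intro sum_list_mono) auto
  also have "\<dots> = weight c * exp_val (choice c) (\<lambda>_. 1) (pstate_of (fst c))"
    by (rule sum_cfg_succs_weight)
  also have "\<dots> \<le> weight c"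
    using exp_val_const_1_le Suc.prems by (simp add: mult_left_le weight_def)
  finally show ?case .
qed

lemma sum_mass_outside_le:
  "0 \<le> Prob (fst c) \<Longrightarrow> (\<Sum>j<m. mass_outside c j) \<le> weight c * horizon_runtime m T (pstate_of (fst c))"
proof (induction m arbitrary: c)
  case 0
  then show ?case by simp
next
  case (Suc m)
  let ?x = "pstate_of (fst c)"
  have "(\<Sum>j<m. mass_outside c (Suc j)) \<le>
      (\<Sum>c'\<leftarrow>cfg_succs c. weight c' * horizon_runtime m T (pstate_of (fst c')))"
    unfolding mass_outside_Suc sum_sum_list_swap
    using Suc Prob_cfg_succs_nonneg by (intro sum_list_mono) auto
  also have "\<dots> = weight c * exp_val (choice c) (horizon_runtime m T) ?x"
    by (rule sum_cfg_succs_weight)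
  finally have le: "(\<Sum>j<Suc m. mass_outside c j) \<le>
      mass_outside c 0 + weight c * exp_val (choice c) (horizon_runtime m T) ?x"
    unfolding sum.lessThan_Suc_shift by simp
  show ?case
  proof (cases "?x \<in> T")
    case True
    then show ?thesis
      using le exp_val_horizon_runtime_in[OF closed True] by (simp add: mass_outside_0)
  next
    case False
    have "weight c * exp_val (choice c) (horizon_runtime m T) ?x \<le>
        weight c * max_exp_val (horizon_runtime m T) ?x"
      using exp_val_le_max_exp_val[OF choice_in] Suc.prems
      by (intro mult_left_mono) (auto simp: weight_def)
    then show ?thesis using le False by (simp add: mass_outside_0 algebra_simps)
  qed
qed

text \<open>Within a stage the configurations follow the optimal strategy, so the bound of
  \<open>sum_mass_outside_le\<close> is attained.\<close>

lemma sum_mass_outside_ge: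
  "0 \<le> Prob (fst c) \<Longrightarrow> snd c = Suc n \<or> n = 0 \<Longrightarrow>
     weight c * horizon_runtime (Suc n) T (pstate_of (fst c)) \<le> (\<Sum>j<Suc n. mass_outside c j)"
proof (induction n arbitrary: c)
  case 0
  then show ?case using horizon_runtime_1 by (simp add: mass_outside_0)
next
  case (Suc n)
  let ?x = "pstate_of (fst c)"
  have counter: "snd c' = Suc n \<or> n = 0" if "c' \<in> set (cfg_succs c)" for c'
    using that Suc.prems(2) by (elim cfg_succsE) (auto simp: next_counter_def)
  have "weight c * exp_val (choice c) (horizon_runtime (Suc n) T) ?x =
      (\<Sum>c'\<leftarrow>cfg_succs c. weight c' * horizon_runtime (Suc n) T (pstate_of (fst c')))"
    by (rule sum_cfg_succs_weight[symmetric])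
  also have "\<dots> \<le> (\<Sum>j<Suc n. mass_outside c (Suc j))"
    unfolding mass_outside_Suc sum_sum_list_swap
    using Suc.IH Prob_cfg_succs_nonneg Suc.prems(1) counter by (intro sum_list_mono) auto
  finally have ge: "mass_outside c 0 + weight c * max_exp_val (horizon_runtime (Suc n) T) ?x \<le>
      (\<Sum>j<Suc (Suc n). mass_outside c j)"
    using Suc.prems(2) unfolding sum.lessThan_Suc_shift[of _ "Suc n"] max_exp_val_argmax choice_def
    by simp
  have "0 \<le> (\<Sum>j<Suc (Suc n). mass_outside c j)"
    using mass_outside_nonneg[OF Suc.prems(1)] by (intro sum_nonneg) auto
  then show ?case using ge by (cases "?x \<in> T") (simp_all add: mass_outside_0 algebra_simps)
qed

lemma counter_cfg_paths: "snd c = q \<Longrightarrow> j + 2 \<le> q \<Longrightarrow> c' \<in> set (cfg_paths j c) \<Longrightarrow> snd c' = q - j"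
proof (induction j arbitrary: c q)
  case (Suc j)
  then obtain c'' where c'': "c'' \<in> set (cfg_succs c)" "c' \<in> set (cfg_paths j c'')" by auto
  have "snd c'' = q - 1"
    using c''(1) Suc.prems(1,2) by (elim cfg_succsE) (auto simp: next_counter_def)
  with Suc.IH[of c'' "q - 1"] Suc.prems(2) c''(2) show ?case by simp
qed simp

lemma counter_stage_end:
  assumes "2 \<le> snd c" "c' \<in> set (cfg_paths (snd c - 1) c)"
  shows "snd c' = horizon (fst c')"
proof -
  have "snd c - 1 = Suc (snd c - 2)" using assms(1) by simp
  then have "c' \<in> set (cfg_paths (Suc (snd c - 2)) c)" using assms(2) by (simp only:)
  then obtain c'' where c'': "c'' \<in> set (cfg_paths (snd c - 2) c)" "c' \<in> set (cfg_succs c'')"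
    by (auto simp only: kleisli_pow_Suc_right set_concat set_map)
  have "snd c'' = 2" using counter_cfg_paths[OF refl _ c''(1)] assms(1) by simp
  with c''(2) show ?thesis by (elim cfg_succsE) (simp add: next_counter_def)
qed

lemma stage_start_horizon:
  assumes "stage_start c"
  defines "x \<equiv> pstate_of (fst c)" and "b \<equiv> weight c"
  shows "2 \<le> snd c" "1 / b + 1 \<le> horizon_runtime (snd c) T x"
    "horizon_runtime (snd c - 1) T x < 1 / b + 1"
proof -
  define good where "good n \<longleftrightarrow> 1 / b + 1 \<le> horizon_runtime n T x" for n
  have b: "0 < b" using assms(1) by (simp add: stage_start_def b_def weight_def)
  have "\<exists>n. good n"
  proof (rule ccontr)
    assume "\<nexists>n. good n"
    then have "horizon_runtime n T x \<le> 1 / b + 1" for n unfolding good_def by (meson nle_le)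
    then have "finite_runtime T x" unfolding finite_runtime_def by (intro bdd_aboveI2)
    then show False using unbounded assms(1) by (simp add: stage_start_def x_def)
  qed
  moreover have counter: "snd c = (LEAST n. good n)"
    using assms(1) by (simp add: stage_start_def horizon_def good_def x_def b_def weight_def)
  ultimately show good: "1 / b + 1 \<le> horizon_runtime (snd c) T x"
    unfolding good_def by (metis LeastI_ex)
  have x: "x \<notin> T" using assms(1) by (simp add: stage_start_def x_def)
  have "0 < 1 / b" using b by simp
  have "snd c \<noteq> 0"
  proof
    assume "snd c = 0"
    then have "1 / b + 1 \<le> 0" using good by simp
    with \<open>0 < 1 / b\<close> show False by linarith
  qed
  moreover have "snd c \<noteq> 1"
  proof
    assume "snd c = 1"
    then have "1 / b + 1 \<le> 1" using good horizon_runtime_1[OF x] by simp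
    with \<open>0 < 1 / b\<close> show False by linarith
  qed
  ultimately show "2 \<le> snd c" by linarith
  then show "horizon_runtime (snd c - 1) T x < 1 / b + 1"
    using not_less_Least[of "snd c - 1" good] counter unfolding good_def by simp
qed

lemma mass_outside_posE:
  assumes "0 < mass_outside c j"
  obtains c' where "c' \<in> set (cfg_paths j c)" "pstate_of (fst c') \<notin> T" "0 < weight c'"
proof -
  have "\<exists>c'\<in>set (filter (\<lambda>c'. pstate_of (fst c') \<notin> T) (cfg_paths j c)). 0 < weight c'"
  proof (rule ccontr)
    assume "\<not> ?thesis"
    then have "weight c' \<le> 0" if "c' \<in> set (filter (\<lambda>c'. pstate_of (fst c') \<notin> T) (cfg_paths j c))"
      for c'
      using that by (meson not_less)
    then have "mass_outside c j \<le> 0"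
      unfolding mass_outside_def by (intro sum_list_nonpos) auto
    with assms show False by simp
  qed
  then show thesis using that by auto
qed

text \<open>With \<open>r = snd c\<close> and \<open>b = weight c\<close>, the first \<open>r - 1\<close> steps of a stage spend
  expected time at least \<open>b * horizon_runtime r T - b \<ge> 1\<close> outside \<open>T\<close>, and step \<open>r - 1\<close>
  still has mass \<open>b * horizon_runtime r T - b * horizon_runtime (r - 1) T > 0\<close> outside it.\<close>

lemma stage_start_next:
  assumes "stage_start c"
  obtains j c' where "c' \<in> set (cfg_paths j c)" "stage_start c'" "1 \<le> (\<Sum>i<j. mass_outside c i)"
proof -
  define r where "r = snd c"
  define b where "b = weight c"
  define x where "x = pstate_of (fst c)"
  have b: "0 < b" and prob: "0 \<le> Prob (fst c)"
    using assms by (auto simp: stage_start_def b_def weight_def)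
  have r: "2 \<le> r" "1 + b \<le> b * horizon_runtime r T x" "b * horizon_runtime (r - 1) T x < 1 + b"
    using stage_start_horizon[OF assms] b unfolding r_def b_def x_def
    by (simp_all add: field_simps)
  have "Suc (r - 1) = r" using r(1) by simp
  then have "b * horizon_runtime r T x \<le> (\<Sum>j<r. mass_outside c j)"
    using sum_mass_outside_ge[OF prob, of "r - 1"] unfolding r_def b_def x_def by simp
  moreover have "(\<Sum>j<r - 1. mass_outside c j) \<le> b * horizon_runtime (r - 1) T x"
    using sum_mass_outside_le[OF prob] by (simp add: b_def x_def)
  moreover have "mass_outside c (r - 1) \<le> b"
    using mass_outside_le_weight[OF prob] by (simp add: b_def)
  moreover have "(\<Sum>j<r. mass_outside c j) = (\<Sum>j<r - 1. mass_outside c j) + mass_outside c (r - 1)"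
    using r(1) sum.lessThan_Suc[of _ "r - 1"] by simp
  ultimately have one: "1 \<le> (\<Sum>j<r - 1. mass_outside c j)" and "0 < mass_outside c (r - 1)"
    using r by linarith+
  obtain c' where c': "c' \<in> set (cfg_paths (r - 1) c)" "pstate_of (fst c') \<notin> T" "0 < weight c'"
    using \<open>0 < mass_outside c (r - 1)\<close> by (rule mass_outside_posE)
  have "stage_start c'"
    using c' counter_stage_end[OF _ c'(1)[unfolded r_def]] r(1)
    by (simp add: stage_start_def r_def weight_def)
  with c'(1) one show thesis using that by blast
qed

lemma Prob_cfg0_paths_nonneg: "c \<in> set (cfg_paths t cfg0) \<Longrightarrow> 0 \<le> Prob (fst c)"
  by (erule Prob_cfg_paths_nonneg[rotated]) (simp add: cfg0_def init_def Prob_def)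

lemma mass_outside_shift:
  assumes "c \<in> set (cfg_paths t cfg0)"
  shows "mass_outside c i \<le> mass_outside cfg0 (t + i)"
proof -
  have "mass_outside c i \<le> (\<Sum>c''\<leftarrow>cfg_paths t cfg0. mass_outside c'' i)"
    using assms Prob_cfg0_paths_nonneg mass_outside_nonneg by (intro member_le_sum_list) auto
  also have "\<dots> = mass_outside cfg0 (t + i)"
    unfolding mass_outside_def kleisli_pow_add sum_list_filter_concat_map ..
  finally show ?thesis .
qed

lemma mass_outside_unbounded:
  "\<exists>t c. c \<in> set (cfg_paths t cfg0) \<and> stage_start c \<and> real N \<le> (\<Sum>k<t. mass_outside cfg0 k)"
proof (induction N)
  case 0
  have "stage_start cfg0"
    using start_outside by (simp add: stage_start_def cfg0_def init_def Prob_def pstate_of_def)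
  then show ?case by (intro exI[of _ 0] exI[of _ cfg0]) simp
next
  case (Suc N)
  then obtain t c where c: "c \<in> set (cfg_paths t cfg0)" "stage_start c"
    and N: "real N \<le> (\<Sum>k<t. mass_outside cfg0 k)"
    by blast
  obtain j c' where c': "c' \<in> set (cfg_paths j c)" "stage_start c'"
    and one: "1 \<le> (\<Sum>i<j. mass_outside c i)"
    using stage_start_next[OF c(2)] by blast
  have "c' \<in> set (cfg_paths (t + j) cfg0)"
    unfolding kleisli_pow_add using c(1) c'(1) by auto
  moreover have "(\<Sum>i<j. mass_outside c i) \<le> (\<Sum>i<j. mass_outside cfg0 (t + i))"
    using mass_outside_shift[OF c(1)] by (intro sum_mono)
  moreover have "(\<Sum>k<t + j. mass_outside cfg0 k) =
      (\<Sum>k<t. mass_outside cfg0 k) + (\<Sum>i<j. mass_outside cfg0 (t + i))"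
    by (induction j) auto
  ultimately have "real (Suc N) \<le> (\<Sum>k<t + j. mass_outside cfg0 k)"
    using N one by simp
  with \<open>c' \<in> set (cfg_paths (t + j) cfg0)\<close> show ?case using c'(2) by blast
qed

lemma mass_outside_le_live_mass: "mass_outside cfg0 k \<le> real_of_rat (live_mass sched \<sigma>0 k)"
proof -
  have paths: "map fst (cfg_paths k cfg0) = exec_states sched \<sigma>0 k"
    unfolding exec_states_def using cfg_paths_fst[OF cfg0_reachable] by (simp add: cfg0_def)
  have nonneg: "0 \<le> real_of_rat (Prob s)" if "s \<in> set (map fst (cfg_paths k cfg0))" for s
    using that Prob_cfg0_paths_nonneg by auto
  have outside: "\<not> terminal_e s" if "pstate_of s \<notin> T" for s
    using that terminals_subset
    by (force simp: terminals_def terminal_def terminal_e_def pstate_of_def)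
  have "mass_outside cfg0 k =
      (\<Sum>s\<leftarrow>filter (\<lambda>s. pstate_of s \<notin> T) (map fst (cfg_paths k cfg0)). real_of_rat (Prob s))"
    unfolding mass_outside_def weight_def by (simp add: filter_map comp_def)
  also have "\<dots> \<le>
      (\<Sum>s\<leftarrow>filter (\<lambda>s. \<not> terminal_e s) (map fst (cfg_paths k cfg0)). real_of_rat (Prob s))"
    using nonneg outside by (rule sum_list_filter_mono)
  also have "\<dots> = real_of_rat (live_mass sched \<sigma>0 k)"
    unfolding live_mass_def paths of_rat_sum_list ..
  finally show ?thesis .
qed

lemma ExpRuntime_sched: "ExpRuntime \<sigma>0 sched = \<infinity>"
proof (rule ExpRuntime_infinite)
  fix N :: real
  obtain n :: nat where "N \<le> real n" using real_arch_simple by blast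
  moreover obtain t where "real n \<le> (\<Sum>k<t. mass_outside cfg0 k)"
    using mass_outside_unbounded[of n] by blast
  moreover have "(\<Sum>k<t. mass_outside cfg0 k) \<le> (\<Sum>k<t. real_of_rat (live_mass sched \<sigma>0 k))"
    using mass_outside_le_live_mass by (intro sum_mono)
  ultimately show "\<exists>K. N \<le> (\<Sum>k<K. real_of_rat (live_mass sched \<sigma>0 k))" by (meson order_trans)
qed

end

lemma divergent_scheduler_exists:
  assumes "terminals \<subseteq> T" "succ_closed T" "\<And>x. x \<notin> T \<Longrightarrow> \<not> finite_runtime T x" "\<sigma>0 \<notin> T"
  shows "\<exists>f\<in>schedulers. ExpRuntime \<sigma>0 f = \<infinity>"
proof -
  interpret divergent_region T \<sigma>0 using assms by unfold_locales
  show ?thesis using sched_in_schedulers ExpRuntime_sched by blast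
qed

section \<open>The tower of sets of states with finite maximal runtime\<close>

definition extend :: "pstate set \<Rightarrow> pstate set" where
  "extend B = B \<union> {x. finite_runtime B x}"

lemma extend_inflationary: "B \<subseteq> extend B"
  unfolding extend_def by blast

lemma succ_closed_extend:
  assumes "succ_closed B"
  shows "succ_closed (extend B)"
  unfolding succ_closed_def
proof
  fix y assume "y \<in> succ_rel `` extend B"
  then obtain x where x: "x \<in> extend B" "(x, y) \<in> succ_rel" by blast
  show "y \<in> extend B"
  proof (cases "x \<in> B")
    case True
    then show ?thesis using assms x(2) extend_inflationary unfolding succ_closed_def by blast
  next
    case False
    then have "finite_runtime B x" using x(1) unfolding extend_def by blast
    then show ?thesis using finite_runtime_succ[OF False _ x(2)] unfolding extend_def by blast
  qed
qed

interpretation runtime: inflationary_tower extend terminals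
  by unfold_locales (rule extend_inflationary)

lemma succ_closed_tower: "X \<in> runtime.tower \<Longrightarrow> succ_closed X"
proof (induction rule: runtime.bw.iterates_above.induct)
  case base
  then show ?case by (rule succ_closed_terminals)
next
  case (step X)
  then show ?case by (blast intro: succ_closed_extend)
next
  case (Sup M)
  then show ?case unfolding succ_closed_def by auto
qed

lemma not_finite_runtime_outside_limit: "x \<notin> runtime.limit \<Longrightarrow> \<not> finite_runtime runtime.limit x"
  using runtime.F_limit unfolding extend_def by blast

lemma PAST_Reach_subset_limit:
  assumes "P \<in> PAST"
  shows "Reach (P, eta0) \<subseteq> runtime.limit"
proof -
  have "(P, eta0) \<in> runtime.limit"
  proof (rule ccontr)
    assume "(P, eta0) \<notin> runtime.limit"
    then obtain f where "f \<in> schedulers" "ExpRuntime (P, eta0) f = \<infinity>"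
      using divergent_scheduler_exists[OF _ _ not_finite_runtime_outside_limit]
        runtime.base_subset_tower runtime.limit_in_tower succ_closed_tower by blast
    with assms show False unfolding PAST_def by fastforce
  qed
  then show ?thesis
    using Reach_subset_succ_closed[OF succ_closed_tower[OF runtime.limit_in_tower]] by blast
qed

section \<open>Ranking supermartingale maps from maximal runtimes\<close>

lemma det_succ_le_max_exp_val:
  assumes "det_succ \<tau> \<tau>'"
  shows "G \<tau>' \<le> max_exp_val G \<tau>"
proof -
  obtain w' where "step (\<lambda>_. Ln) (init \<tau>) (fst \<tau>', snd \<tau>', 1, w')"
    using assms unfolding det_succ_def schedulers_def by blast
  then have "succs Ln (fst \<tau>) (snd \<tau>) = [(fst \<tau>', snd \<tau>', 1, w')]"
    by (simp add: step_iff_in_step_succs step_succs_init succs_prob_one)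
  then have "exp_val Ln G \<tau> = G \<tau>'" by (simp add: exp_val_def)
  then show ?thesis using exp_val_le_max_exp_val[of Ln G \<tau>] by simp
qed

lemma nondet_succ_le_max_exp_val:
  assumes "nondet_succ \<tau> \<tau>l \<tau>r"
  shows "max (G \<tau>l) (G \<tau>r) \<le> max_exp_val G \<tau>"
proof -
  have succ: "(fst \<tau>l, snd \<tau>l, 1, [Ln]) \<in> set (succs d (fst \<tau>) (snd \<tau>)) \<or>
      (fst \<tau>r, snd \<tau>r, 1, [Rn]) \<in> set (succs d (fst \<tau>) (snd \<tau>))" if "d \<in> {Ln, Rn}" for d
    using assms that unfolding nondet_succ_def schedulers_def
    by (auto simp: step_iff_in_step_succs step_succs_init)
  have nd: "nd_redex (fst \<tau>)"
    using succ[of Ln] succs_letters_not_nd_redex by fastforce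
  then have "(fst \<tau>l, snd \<tau>l, 1, [Ln]) \<in> set (succs Ln (fst \<tau>) (snd \<tau>))"
    and "(fst \<tau>r, snd \<tau>r, 1, [Rn]) \<in> set (succs Rn (fst \<tau>) (snd \<tau>))"
    using succ[of Ln] succ[of Rn] succs_letters_nd_redex by fastforce+
  then have "succs Ln (fst \<tau>) (snd \<tau>) = [(fst \<tau>l, snd \<tau>l, 1, [Ln])]"
    and "succs Rn (fst \<tau>) (snd \<tau>) = [(fst \<tau>r, snd \<tau>r, 1, [Rn])]"
    by (auto dest: succs_prob_one)
  then show ?thesis using nd by (simp add: max_exp_val_def exp_val_def)
qed

lemma prob_succ_le_max_exp_val:
  assumes "prob_succ \<tau> p \<tau>l \<tau>r"
  shows "real_of_rat p * G \<tau>l + (1 - real_of_rat p) * G \<tau>r \<le> max_exp_val G \<tau>"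
proof -
  have l: "(fst \<tau>l, snd \<tau>l, p, [Lp]) \<in> set (succs Ln (fst \<tau>) (snd \<tau>))"
    and r: "(fst \<tau>r, snd \<tau>r, 1 - p, [Rp]) \<in> set (succs Ln (fst \<tau>) (snd \<tau>))"
    using assms unfolding prob_succ_def schedulers_def
    by (auto simp: step_iff_in_step_succs step_succs_init)
  have "\<not> nd_redex (fst \<tau>)" using succs_letters_nd_redex[OF _ l] by auto
  moreover have "exp_val Ln G \<tau> = real_of_rat p * G \<tau>l + (1 - real_of_rat p) * G \<tau>r"
    using succs_shape[of Ln "fst \<tau>" "snd \<tau>"] l r by (auto simp: exp_val_def of_rat_diff)
  ultimately show ?thesis by (simp add: max_exp_val_def)
qed

lemma RSM_map_max_runtime:
  assumes "terminals \<subseteq> Y" "succ_closed Y" "S \<subseteq> extend Y"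
  defines "h \<equiv> \<lambda>\<tau>. if \<tau> \<in> S - Y then max_runtime Y \<tau> else 0"
  shows "RSM_map h 1" and "h \<tau> = 0 \<longleftrightarrow> \<tau> \<notin> S \<or> \<tau> \<in> Y"
proof -
  have finite: "finite_runtime Y \<tau>" if "\<tau> \<in> extend Y" for \<tau>
    using that finite_runtime_in unfolding extend_def by blast
  have closed: "succ_closed (extend Y)" using assms(2) by (rule succ_closed_extend)
  have h_le: "h y \<le> max_runtime Y y" if "y \<in> extend Y" for y
    using max_runtime_nonneg[OF finite[OF that]] by (simp add: h_def)
  show "h \<tau> = 0 \<longleftrightarrow> \<tau> \<notin> S \<or> \<tau> \<in> Y"
  proof (cases "\<tau> \<in> S - Y")
    case True
    then have "1 \<le> max_runtime Y \<tau>" using max_runtime_ge_1[OF finite] assms(3) by blast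
    then show ?thesis using True by (simp add: h_def)
  qed (auto simp: h_def)
  show "RSM_map h 1"
    unfolding RSM_map_def
  proof (intro conjI allI impI)
    fix \<tau>
    show "0 \<le> h \<tau>"
      using max_runtime_nonneg[OF finite[of \<tau>]] assms(3) by (cases "\<tau> \<in> S") (auto simp: h_def)
    show "terminal \<tau> \<Longrightarrow> h \<tau> = 0" using assms(1) by (auto simp: h_def terminals_def)
    assume "0 < h \<tau>"
    then have \<tau>: "\<tau> \<in> S" "\<tau> \<notin> Y" by (auto simp: h_def split: if_splits)
    have "\<tau> \<in> extend Y" using \<tau>(1) assms(3) by blast
    have "max_exp_val h \<tau> \<le> max_exp_val (max_runtime Y) \<tau>"
      using closed \<open>\<tau> \<in> extend Y\<close> h_le by (intro max_exp_val_mono) (auto simp: succ_closed_def)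
    also have "\<dots> \<le> h \<tau> - 1"
      using max_runtime_bellman[OF \<tau>(2) finite[OF \<open>\<tau> \<in> extend Y\<close>]] \<tau> by (simp add: h_def)
    finally have decrease: "max_exp_val h \<tau> + 1 \<le> h \<tau>" by simp
    show "h \<tau>' + 1 \<le> h \<tau>" if "det_succ \<tau> \<tau>'" for \<tau>'
      using det_succ_le_max_exp_val[OF that, of h] decrease by linarith
    show "max (h \<tau>l) (h \<tau>r) + 1 \<le> h \<tau>" if "nondet_succ \<tau> \<tau>l \<tau>r" for \<tau>l \<tau>r
      using nondet_succ_le_max_exp_val[OF that, of h] decrease by linarith
    show "real_of_rat p * h \<tau>l + (1 - real_of_rat p) * h \<tau>r + 1 \<le> h \<tau>"
      if "prob_succ \<tau> p \<tau>l \<tau>r" for p \<tau>l \<tau>r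
      using prob_succ_le_max_exp_val[OF that, of h] decrease by linarith
  qed simp
qed

lemma terminal_iff_rank_set_empty: "terminal \<sigma> \<longleftrightarrow> runtime.rank_set \<sigma> = {}"
proof
  assume "terminal \<sigma>"
  then show "runtime.rank_set \<sigma> = {}" by (intro runtime.rank_set_base) (simp add: terminals_def)
next
  assume empty: "runtime.rank_set \<sigma> = {}"
  show "terminal \<sigma>"
  proof (rule ccontr)
    assume "\<not> terminal \<sigma>"
    then have "terminals \<subseteq> runtime.rank_set \<sigma>"
      by (intro runtime.base_subset_rank_set) (simp add: terminals_def)
    moreover have "(Bot, eta0) \<in> terminals" by (simp add: terminals_def terminal_def)
    ultimately show False using empty by blast
  qed
qed

text \<open>The certification of the statement is \<open>k \<sigma> = (certificate \<sigma>, 1)\<close>.\<close>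

definition certificate :: "pstate \<Rightarrow> pstate \<Rightarrow> real" where
  "certificate \<sigma> \<tau> = (if \<tau> \<in> Reach \<sigma> - runtime.rank_set \<sigma>
     then max_runtime (runtime.rank_set \<sigma>) \<tau> else 0)"

lemma Reach_subset_extend_rank_set:
  assumes "\<sigma> \<in> runtime.limit" "\<sigma> \<notin> terminals"
  shows "Reach \<sigma> \<subseteq> extend (runtime.rank_set \<sigma>)"
  using runtime.in_F_rank_set[OF assms] runtime.rank_set_in_tower[OF assms(2)]
  by (intro Reach_subset_succ_closed succ_closed_extend succ_closed_tower)

lemma
  assumes "\<sigma> \<in> runtime.limit" "\<not> terminal \<sigma>"
  shows RSM_map_certificate: "RSM_map (certificate \<sigma>) 1"
    and certificate_eq_0_iff:
      "certificate \<sigma> \<tau> = 0 \<longleftrightarrow> \<tau> \<notin> Reach \<sigma> \<or> runtime.rank_set \<tau> \<subset> runtime.rank_set \<sigma>"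
proof -
  have \<sigma>: "\<sigma> \<notin> terminals" using assms(2) by (simp add: terminals_def)
  note Y = runtime.rank_set_in_tower[OF \<sigma>]
  note max_runtime = RSM_map_max_runtime[OF runtime.base_subset_rank_set[OF \<sigma>]
      succ_closed_tower[OF Y] Reach_subset_extend_rank_set[OF assms(1) \<sigma>], folded certificate_def]
  show "RSM_map (certificate \<sigma>) 1" by (rule max_runtime(1))
  show "certificate \<sigma> \<tau> = 0 \<longleftrightarrow> \<tau> \<notin> Reach \<sigma> \<or> runtime.rank_set \<tau> \<subset> runtime.rank_set \<sigma>"
    unfolding max_runtime(2) runtime.in_tower_iff_rank_set_psubset[OF Y] ..
qed

lemma Reach_rank_ordinal:
  obtains r :: "nat rel" and g where "Well_order r"
    "\<And>\<sigma>. \<sigma> \<in> Reach \<sigma>0 \<Longrightarrow> g \<sigma> \<in> Field r"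
    "\<And>\<sigma>. \<sigma> \<in> Reach \<sigma>0 \<Longrightarrow> g \<sigma> = ord_zero r \<longleftrightarrow> terminal \<sigma>"
    "\<And>\<sigma> \<tau>. \<sigma> \<in> Reach \<sigma>0 \<Longrightarrow> \<tau> \<in> Reach \<sigma> \<Longrightarrow>
       ord_less r (g \<tau>) (g \<sigma>) \<longleftrightarrow> runtime.rank_set \<tau> \<subset> runtime.rank_set \<sigma>"
proof -
  define R where "R = succ_rel\<^sup>* `` {\<sigma>0}"
  have Reach_R: "Reach \<sigma> \<subseteq> R" if "\<sigma> \<in> R" for \<sigma>
    using Reach_subset_succ_closed[OF succ_closed_rtrancl_Image that[unfolded R_def]]
    unfolding R_def .
  have R0: "Reach \<sigma>0 \<subseteq> R" by (rule Reach_R) (simp add: R_def)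
  obtain r :: "nat rel" and g where r: "Well_order r" "\<And>\<sigma>. \<sigma> \<in> R \<Longrightarrow> g \<sigma> \<in> Field r"
    "\<And>\<sigma>. \<sigma> \<in> R \<Longrightarrow> g \<sigma> = ord_zero r \<longleftrightarrow> runtime.rank_set \<sigma> = {}"
    "\<And>\<sigma> \<tau>. \<sigma> \<in> R \<Longrightarrow> \<tau> \<in> R \<Longrightarrow>
       ord_less r (g \<tau>) (g \<sigma>) \<longleftrightarrow> runtime.rank_set \<tau> \<subset> runtime.rank_set \<sigma>"
    using runtime.countable_rank_ordinal[OF countable_succ_rel_rtrancl_Image]
    unfolding R_def by blast
  show thesis
  proof (rule that[OF r(1)])
    fix \<sigma> assume \<sigma>: "\<sigma> \<in> Reach \<sigma>0"
    then have "\<sigma> \<in> R" using R0 by blast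
    then show "g \<sigma> \<in> Field r" "g \<sigma> = ord_zero r \<longleftrightarrow> terminal \<sigma>"
      using r(2,3) by (simp_all add: terminal_iff_rank_set_empty)
    fix \<tau> assume "\<tau> \<in> Reach \<sigma>"
    then show "ord_less r (g \<tau>) (g \<sigma>) \<longleftrightarrow> runtime.rank_set \<tau> \<subset> runtime.rank_set \<sigma>"
      using r(4) Reach_R[OF \<open>\<sigma> \<in> R\<close>] \<open>\<sigma> \<in> R\<close> by blast
  qed
qed

theorem theorem5p12:
  fixes P :: prog
  assumes "P \<in> PAST"
  shows "\<exists>(r :: nat rel) (g :: pstate \<Rightarrow> nat) (k :: pstate \<Rightarrow> (pstate \<Rightarrow> real) \<times> real).
     Well_order r \<and>
     (\<forall>\<sigma>\<in>Reach (P, eta0). g \<sigma> \<in> Field r) \<and>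
     (\<forall>\<sigma>\<in>Reach (P, eta0). g \<sigma> = ord_zero r \<longleftrightarrow> terminal \<sigma>) \<and>
     (\<forall>\<sigma>\<in>Reach (P, eta0). \<not> terminal \<sigma> \<longrightarrow>
        RSM_map (fst (k \<sigma>)) (snd (k \<sigma>)) \<and>
        (\<forall>\<tau>. fst (k \<sigma>) \<tau> = 0 \<longleftrightarrow>
           \<tau> \<in> {\<sigma>' \<in> Reach \<sigma>. ord_less r (g \<sigma>') (g \<sigma>)} \<union> (UNIV - Reach \<sigma>)))"
proof -
  obtain r :: "nat rel" and g where r: "Well_order r"
    "\<And>\<sigma>. \<sigma> \<in> Reach (P, eta0) \<Longrightarrow> g \<sigma> \<in> Field r"
    "\<And>\<sigma>. \<sigma> \<in> Reach (P, eta0) \<Longrightarrow> g \<sigma> = ord_zero r \<longleftrightarrow> terminal \<sigma>"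
    "\<And>\<sigma> \<tau>. \<sigma> \<in> Reach (P, eta0) \<Longrightarrow> \<tau> \<in> Reach \<sigma> \<Longrightarrow>
       ord_less r (g \<tau>) (g \<sigma>) \<longleftrightarrow> runtime.rank_set \<tau> \<subset> runtime.rank_set \<sigma>"
    using Reach_rank_ordinal[of "(P, eta0)"] by blast
  have "RSM_map (certificate \<sigma>) 1 \<and> (\<forall>\<tau>. certificate \<sigma> \<tau> = 0 \<longleftrightarrow>
      \<tau> \<in> {\<sigma>' \<in> Reach \<sigma>. ord_less r (g \<sigma>') (g \<sigma>)} \<union> (UNIV - Reach \<sigma>))"
    if \<sigma>: "\<sigma> \<in> Reach (P, eta0)" and "\<not> terminal \<sigma>" for \<sigma>
  proof -
    have "\<sigma> \<in> runtime.limit" using PAST_Reach_subset_limit[OF assms] \<sigma> by blast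
    with \<open>\<not> terminal \<sigma>\<close> show ?thesis
      using RSM_map_certificate certificate_eq_0_iff r(4)[OF \<sigma>] by blast
  qed
  with r(1-3) show ?thesis
    by (intro exI[of _ r] exI[of _ g] exI[of _ "\<lambda>\<sigma>. (certificate \<sigma>, 1)"]) simp
qed

end
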